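(* Let $d>2$ and let $J_x,J_y$ be the generators of rotations in the irreducible spin-$J$ representation of $SU(2)$ on a $d$-dimensional Hilbert space, so $d=2J+1$. Let $h$ be a traceless Hermitian operator on this space such that there exists $q\in\{-2,\dots,2\}$ with $\mathrm{Tr}\big(h\,T^{(2)}_q\big)\neq 0$. Then the Lie algebra generated by $\{J_x,J_y,h\}$ is $\mathfrak{su}(d)$.
   Context: For the spin-$J$ representation with basis $\{|J,m\rangle\}_{m=-J}^{J}$, the irreducible spherical tensor operators are $T^{(k)}_q(J)=\sqrt{\frac{2k+1}{2J+1}}\sum_m \langle J,m+q|k,q;J,m\rangle\,|J,m+q\rangle\langle J,m|$ for $0\le k\le 2J$, $-k\le q\le k$, where $\langle J,m+q|k,q;J,m\rangle$ are Clebsch–Gordan coefficients; they form an orthonormal operator basis for the trace inner product. "The Lie algebra generated by a set of Hermitian operators $\{H_1,\dots,H_n\}$" means the smallest real vector space of operators containing $-iH_1,\dots,-iH_n$ and closed under commutators; $\mathfrak{su}(d)$ is the Lie algebra of traceless anti-Hermitian $d\times d$ matrices. *)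

theory Defs
  imports Complex_Main "Jordan_Normal_Form.Matrix"
begin

definition dagger :: "complex mat \<Rightarrow> complex mat" where
  "dagger A = mat (dim_col A) (dim_row A) (\<lambda>(i,j). cnj (A $$ (j,i)))"

definition hermitian :: "complex mat \<Rightarrow> bool" where
  "hermitian A \<longleftrightarrow> dagger A = A"

definition trace :: "complex mat \<Rightarrow> complex" where
  "trace A = (\<Sum>i<dim_row A. A $$ (i,i))"

text \<open>Clebsch--Gordan coefficient <j1 m1; j2 m2 | j m> (Racah formula, Condon--Shortley
  convention), for real (half-)integer arguments; zero when the labels are not admissible.\<close>
definition rfact :: "real \<Rightarrow> real" where
  "rfact x = fact (nat \<lfloor>x\<rfloor>)"

definition clebsch_gordan :: "real \<Rightarrow> real \<Rightarrow> real \<Rightarrow> real \<Rightarrow> real \<Rightarrow> real \<Rightarrow> real" where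
  "clebsch_gordan j1 m1 j2 m2 j m =
    (if m = m1 + m2 \<and> \<bar>m1\<bar> \<le> j1 \<and> \<bar>m2\<bar> \<le> j2 \<and> \<bar>m\<bar> \<le> j
        \<and> \<bar>j1 - j2\<bar> \<le> j \<and> j \<le> j1 + j2 \<and> j1 + j2 + j \<in> \<int>
        \<and> j1 - m1 \<in> \<int> \<and> j1 + m1 \<in> \<int> \<and> j2 - m2 \<in> \<int> \<and> j2 + m2 \<in> \<int>
        \<and> j - m \<in> \<int> \<and> j + m \<in> \<int>
     then sqrt ((2*j + 1) * rfact (j + j1 - j2) * rfact (j - j1 + j2) * rfact (j1 + j2 - j)
                / rfact (j1 + j2 + j + 1))
        * sqrt (rfact (j + m) * rfact (j - m) * rfact (j1 - m1) * rfact (j1 + m1)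
                * rfact (j2 - m2) * rfact (j2 + m2))
        * (\<Sum>t\<in>{t\<in>{0..nat \<lfloor>j1 + j2 - j\<rfloor>}.
                 real t \<le> j1 - m1 \<and> real t \<le> j2 + m2 \<and>
                 0 \<le> j - j2 + m1 + real t \<and> 0 \<le> j - j1 - m2 + real t}.
             (-1) ^ t / (fact t * rfact (j1 + j2 - j - real t) * rfact (j1 - m1 - real t)
                 * rfact (j2 + m2 - real t) * rfact (j - j2 + m1 + real t)
                 * rfact (j - j1 - m2 + real t)))
     else 0)"

text \<open>Spin-J representation on C^d, d = 2J+1.  Basis index i < d corresponds to
  |J, m_i> with m_i = i - J.\<close>
definition spinJ :: "nat \<Rightarrow> real" where
  "spinJ d = (real d - 1) / 2"

definition mval :: "nat \<Rightarrow> nat \<Rightarrow> real" where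
  "mval d i = real i - spinJ d"

definition Jplus :: "nat \<Rightarrow> complex mat" where
  "Jplus d = mat d d (\<lambda>(i,j). if i = j + 1 then
      complex_of_real (sqrt (spinJ d * (spinJ d + 1) - mval d j * (mval d j + 1))) else 0)"

definition Jminus :: "nat \<Rightarrow> complex mat" where
  "Jminus d = dagger (Jplus d)"

definition Jx :: "nat \<Rightarrow> complex mat" where
  "Jx d = (1/2 :: complex) \<cdot>\<^sub>m (Jplus d + Jminus d)"

definition Jy :: "nat \<Rightarrow> complex mat" where
  "Jy d = (1/(2*\<i>) :: complex) \<cdot>\<^sub>m (Jplus d - Jminus d)"

definition spin_tensor :: "nat \<Rightarrow> nat \<Rightarrow> int \<Rightarrow> complex mat" where
  "spin_tensor d k q = mat d d (\<lambda>(i,j).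
     if mval d i = mval d j + of_int q then
       complex_of_real (sqrt ((2 * real k + 1) / (2 * spinJ d + 1))
         * clebsch_gordan (real k) (of_int q) (spinJ d) (mval d j) (spinJ d) (mval d i))
     else 0)"

inductive_set lie_generated :: "nat \<Rightarrow> complex mat set \<Rightarrow> complex mat set"
  for d :: nat and S :: "complex mat set" where
  gen: "A \<in> S \<Longrightarrow> A \<in> lie_generated d S"
| zero: "0\<^sub>m d d \<in> lie_generated d S"
| add: "A \<in> lie_generated d S \<Longrightarrow> B \<in> lie_generated d S \<Longrightarrow> A + B \<in> lie_generated d S"
| scale: "A \<in> lie_generated d S \<Longrightarrow> complex_of_real r \<cdot>\<^sub>m A \<in> lie_generated d S"
| bracket: "A \<in> lie_generated d S \<Longrightarrow> B \<in> lie_generated d S \<Longrightarrow>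
            A * B - B * A \<in> lie_generated d S"

definition su :: "nat \<Rightarrow> complex mat set" where
  "su d = {A \<in> carrier_mat d d. dagger A = - A \<and> trace A = 0}"

end

theory Submission
  imports Defs
begin

text \<open>
  Let \<open>L\<close> be the real Lie algebra generated by \<open>-\<i> J\<^sub>x, -\<i> J\<^sub>y, -\<i> h\<close> and \<open>M = L + \<i> L\<close> its
  complexification. Since \<open>L \<subseteq> su(d)\<close> and a matrix has only one decomposition \<open>X + \<i> Y\<close> with
  \<open>X, Y\<close> anti-Hermitian, \<open>L = su(d)\<close> as soon as \<open>M\<close> contains every traceless matrix.

  \<open>M\<close> contains the ladder operators \<open>J\<^sub>\<plusminus> = J\<^sub>x \<plusminus> \<i> J\<^sub>y\<close> and hence \<open>[J\<^sub>+, J\<^sub>-] = 2 J\<^sub>z\<close>, whose adjoint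
  action separates the diagonals of a matrix, so \<open>M\<close> is closed under taking a single diagonal.
  On diagonal matrices \<open>f \<mapsto> diag [J\<^sub>+, [J\<^sub>-, diag f]]\<close> is a Casimir operator \<open>C\<close>, triangular on
  falling factorials with the simple spectrum \<open>l(l+1)\<close>, \<open>l < d\<close>, and symmetric for the pairing
  \<open>\<Sum>\<^sub>x f x g x\<close>; its eigenvector for \<open>l = 2\<close> is the diagonal \<open>v\<close> of \<open>T\<^sup>(\<^sup>2\<^sup>)\<^sub>0\<close>. Since
  \<open>T\<^sup>(\<^sup>2\<^sup>)\<^sub>q\<close> is a multiple of \<open>ad(J\<^sub>\<plusminus>)\<^sup>|\<^sup>q\<^sup>| T\<^sup>(\<^sup>2\<^sup>)\<^sub>0\<close>, the hypothesis \<open>Tr(h T\<^sup>(\<^sup>2\<^sup>)\<^sub>q) \<noteq> 0\<close> yields, by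
  invariance of the trace form, a diagonal element of \<open>M\<close> with nonzero pairing against \<open>v\<close>;
  applying \<open>\<Prod>\<^sub>l\<^sub>\<noteq>\<^sub>2 (C - l(l+1))\<close> to it gives \<open>diag v\<close> itself. The adjacent gaps of the
  quadratic \<open>v\<close> are pairwise distinct, so projecting \<open>J\<^sub>\<plusminus>\<close> onto the eigenspaces of \<open>ad (diag v)\<close>
  isolates all matrix units \<open>E\<^sub>k\<^sub>+\<^sub>1\<^sub>,\<^sub>k\<close> and \<open>E\<^sub>k\<^sub>,\<^sub>k\<^sub>+\<^sub>1\<close>, and these generate \<open>sl(d)\<close>.
\<close>

section \<open>Matrix algebra\<close>

abbreviation lie_bracket :: "complex mat \<Rightarrow> complex mat \<Rightarrow> complex mat" where
  "lie_bracket A B \<equiv> A * B - B * A"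

lemma index_mult_mat_sum:
  assumes "A \<in> carrier_mat n m" "B \<in> carrier_mat m p" "i < n" "j < p"
  shows "(A * B) $$ (i,j) = (\<Sum>k<m. A $$ (i,k) * B $$ (k,j))"
  using assms by (simp add: scalar_prod_def atLeast0LessThan)

declare index_mult_mat(1)[simp del]

lemma index_lie_bracket:
  assumes "A \<in> carrier_mat d d" "B \<in> carrier_mat d d" "i < d" "j < d"
  shows "lie_bracket A B $$ (i,j) = (A * B) $$ (i,j) - (B * A) $$ (i,j)"
  using assms by simp

lemma lie_bracket_carrier:
  "A \<in> carrier_mat d d \<Longrightarrow> B \<in> carrier_mat d d \<Longrightarrow> lie_bracket A B \<in> carrier_mat d d"
  by (meson minus_carrier_mat mult_carrier_mat)

lemma ad_pow_carrier:
  "A \<in> carrier_mat d d \<Longrightarrow> X \<in> carrier_mat d d \<Longrightarrow> (lie_bracket A ^^ n) X \<in> carrier_mat d d"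
  by (induction n) (auto intro: lie_bracket_carrier)

lemma trace_add: "A \<in> carrier_mat d d \<Longrightarrow> B \<in> carrier_mat d d \<Longrightarrow> trace (A + B) = trace A + trace B"
  by (simp add: trace_def sum.distrib)

lemma trace_minus: "A \<in> carrier_mat d d \<Longrightarrow> B \<in> carrier_mat d d \<Longrightarrow> trace (A - B) = trace A - trace B"
  by (simp add: trace_def sum_subtractf)

lemma trace_smult: "A \<in> carrier_mat d d \<Longrightarrow> trace (c \<cdot>\<^sub>m A) = c * trace A"
  by (simp add: trace_def sum_distrib_left)

lemma trace_mult_smult_right:
  "A \<in> carrier_mat d d \<Longrightarrow> B \<in> carrier_mat d d \<Longrightarrow> trace (A * (c \<cdot>\<^sub>m B)) = c * trace (A * B)"
  by (simp add: mult_smult_distrib trace_smult[of "A * B" d])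

lemma trace_mult_comm:
  assumes "A \<in> carrier_mat d d" "B \<in> carrier_mat d d"
  shows "trace (A * B) = trace (B * A)"
proof -
  have "trace (A * B) = (\<Sum>i<d. \<Sum>k<d. A $$ (i,k) * B $$ (k,i))"
    using assms by (auto simp: trace_def index_mult_mat_sum intro!: sum.cong)
  also have "\<dots> = (\<Sum>k<d. \<Sum>i<d. B $$ (k,i) * A $$ (i,k))"
    by (subst sum.swap) (simp add: mult.commute)
  also have "\<dots> = trace (B * A)"
    using assms by (auto simp: trace_def index_mult_mat_sum intro!: sum.cong)
  finally show ?thesis .
qed

lemma trace_lie_bracket: "A \<in> carrier_mat d d \<Longrightarrow> B \<in> carrier_mat d d \<Longrightarrow> trace (lie_bracket A B) = 0"
  by (simp add: trace_minus[of _ d] trace_mult_comm[of A d B])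

lemma trace_lie_bracket_mult:
  assumes A: "A \<in> carrier_mat d d" and X: "X \<in> carrier_mat d d" and Y: "Y \<in> carrier_mat d d"
  shows "trace (lie_bracket A X * Y) = - trace (X * lie_bracket A Y)"
proof -
  have "lie_bracket A X * Y = A * (X * Y) - X * (A * Y)"
    using assms by (simp add: minus_mult_distrib_mat[of _ d d] assoc_mult_mat[of _ d d])
  moreover have "X * lie_bracket A Y = X * (A * Y) - X * (Y * A)"
    using assms by (intro mult_minus_distrib_mat) auto
  moreover have "trace (A * (X * Y)) = trace (X * (Y * A))"
    using assms trace_mult_comm[of A d "X * Y"] by (simp add: assoc_mult_mat[of X d d Y d A d])
  ultimately show ?thesis
    using assms by (simp add: trace_minus[of _ d])
qed

lemma trace_ad_pow_mult:
  assumes A: "A \<in> carrier_mat d d" and X: "X \<in> carrier_mat d d" and Y: "Y \<in> carrier_mat d d"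
  shows "trace ((lie_bracket A ^^ n) X * Y) = (-1) ^ n * trace (X * (lie_bracket A ^^ n) Y)"
  using Y
proof (induction n arbitrary: Y)
  case (Suc n)
  have "trace ((lie_bracket A ^^ Suc n) X * Y) = - trace ((lie_bracket A ^^ n) X * lie_bracket A Y)"
    using trace_lie_bracket_mult[OF A ad_pow_carrier[OF A X] Suc.prems] by simp
  also have "\<dots> = (-1) ^ Suc n * trace (X * (lie_bracket A ^^ n) (lie_bracket A Y))"
    using Suc.IH[OF lie_bracket_carrier[OF A Suc.prems]] by simp
  also have "(lie_bracket A ^^ n) (lie_bracket A Y) = (lie_bracket A ^^ Suc n) Y"
    by (simp only: funpow_Suc_right comp_apply)
  finally show ?case .
qed simp

lemma dagger_dims[simp]: "dim_row (dagger A) = dim_col A" "dim_col (dagger A) = dim_row A"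
  by (simp_all add: dagger_def)

lemma index_dagger[simp]: "i < dim_col A \<Longrightarrow> j < dim_row A \<Longrightarrow> dagger A $$ (i,j) = cnj (A $$ (j,i))"
  by (simp add: dagger_def)

lemma dagger_add: "A \<in> carrier_mat d d \<Longrightarrow> B \<in> carrier_mat d d \<Longrightarrow> dagger (A + B) = dagger A + dagger B"
  by (intro eq_matI) auto

lemma dagger_minus: "A \<in> carrier_mat d d \<Longrightarrow> B \<in> carrier_mat d d \<Longrightarrow> dagger (A - B) = dagger A - dagger B"
  by (intro eq_matI) auto

lemma dagger_smult: "dagger (c \<cdot>\<^sub>m A) = cnj c \<cdot>\<^sub>m dagger A"
  by (intro eq_matI) auto

lemma dagger_mult:
  "A \<in> carrier_mat d d \<Longrightarrow> B \<in> carrier_mat d d \<Longrightarrow> dagger (A * B) = dagger B * dagger A"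
  by (intro eq_matI) (auto simp: index_mult_mat scalar_prod_def mult.commute)

lemma su_lie_bracket:
  assumes "A \<in> su d" "B \<in> su d" shows "lie_bracket A B \<in> su d"
proof -
  have A: "A \<in> carrier_mat d d" "dagger A = - A" and B: "B \<in> carrier_mat d d" "dagger B = - B"
    using assms by (auto simp: su_def)
  have "dagger (lie_bracket A B) = (- B) * (- A) - (- A) * (- B)"
    using A B by (simp add: dagger_minus[of _ d] dagger_mult[of _ d])
  also have "\<dots> = - lie_bracket A B"
    using A B by (intro eq_matI) (auto simp: scalar_prod_def sum_negf)
  finally show ?thesis
    using A B trace_lie_bracket[of A d B] lie_bracket_carrier[of A d B] by (simp add: su_def)
qed

lemma lie_generated_subset_su:
  assumes "S \<subseteq> su d" shows "lie_generated d S \<subseteq> su d"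
proof
  fix A assume "A \<in> lie_generated d S"
  then show "A \<in> su d"
  proof induction
    case (gen A) then show ?case using assms by auto
  next
    case zero then show ?case by (auto simp: su_def trace_def intro!: eq_matI)
  next
    case (add A B) then show ?case by (auto simp: su_def dagger_add trace_add intro!: eq_matI)
  next
    case (scale A r) then show ?case by (auto simp: su_def dagger_smult trace_smult intro!: eq_matI)
  next
    case (bracket A B) then show ?case by (simp add: su_lie_bracket)
  qed
qed

lemma anti_hermitian_decomposition_unique:
  assumes "A = X + \<i> \<cdot>\<^sub>m Y" "X \<in> su d" "Y \<in> su d" "A \<in> su d"
  shows "A = X"
proof (rule eq_matI)
  fix a b assume "a < dim_row X" "b < dim_col X"
  then have ab: "a < d" "b < d" using assms(2) by (auto simp: su_def)
  have anti: "cnj (Z $$ (b,a)) = - Z $$ (a,b)" if "Z \<in> su d" for Z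
  proof -
    have "Z \<in> carrier_mat d d" "dagger Z = - Z" using that by (auto simp: su_def)
    then show ?thesis using index_dagger[of a Z b] ab by auto
  qed
  have entry: "A $$ (i,j) = X $$ (i,j) + \<i> * Y $$ (i,j)" if "i < d" "j < d" for i j
    using assms that by (auto simp: su_def)
  have "- A $$ (a,b) = - X $$ (a,b) + \<i> * Y $$ (a,b)"
    using anti[OF assms(4)] anti[OF assms(2)] anti[OF assms(3)] entry[OF ab(2,1)] by simp
  then show "A $$ (a,b) = X $$ (a,b)" using entry[OF ab] by simp
qed (use assms in \<open>auto simp: su_def\<close>)

lemma index_mat_diag[simp]: "i < n \<Longrightarrow> j < n \<Longrightarrow> mat_diag n f $$ (i,j) = (if i = j then f i else 0)"
  by (simp add: mat_diag_def)

lemma mat_diag_dims[simp]: "dim_row (mat_diag n f) = n" "dim_col (mat_diag n f) = n"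
  by (simp_all add: mat_diag_def)

lemma mat_diag_mult_index:
  "X \<in> carrier_mat d d \<Longrightarrow> i < d \<Longrightarrow> j < d \<Longrightarrow> (mat_diag d f * X) $$ (i,j) = f i * X $$ (i,j)"
  by (simp add: mat_diag_mult_left)

lemma mult_mat_diag_index:
  "X \<in> carrier_mat d d \<Longrightarrow> i < d \<Longrightarrow> j < d \<Longrightarrow> (X * mat_diag d f) $$ (i,j) = X $$ (i,j) * f j"
  by (simp add: mat_diag_mult_right)

lemma eq_smult_if_entries:
  assumes "A \<in> carrier_mat d d" "B \<in> carrier_mat d d"
    and "\<And>k i. k < d \<Longrightarrow> i < d \<Longrightarrow> A $$ (k,i) = c * B $$ (k,i)"
  shows "A = c \<cdot>\<^sub>m B"
  using assms by (intro eq_matI) auto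

definition mat_unit :: "nat \<Rightarrow> nat \<Rightarrow> nat \<Rightarrow> complex mat" where
  "mat_unit d a b = mat d d (\<lambda>(i,j). if i = a \<and> j = b then 1 else 0)"

lemma mat_unit_carrier[simp]: "mat_unit d a b \<in> carrier_mat d d"
  by (simp add: mat_unit_def)

lemma mat_unit_dims[simp]: "dim_row (mat_unit d a b) = d" "dim_col (mat_unit d a b) = d"
  by (simp_all add: mat_unit_def)

lemma index_mat_unit[simp]: "i < d \<Longrightarrow> j < d \<Longrightarrow> mat_unit d a b $$ (i,j) = (if i = a \<and> j = b then 1 else 0)"
  by (simp add: mat_unit_def)

lemma mat_unit_mult:
  assumes "a < d" "b < d" "c < d" "e < d"
  shows "mat_unit d a b * mat_unit d c e = (if b = c then mat_unit d a e else 0\<^sub>m d d)"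
proof (rule eq_matI)
  fix i j assume "i < dim_row (if b = c then mat_unit d a e else 0\<^sub>m d d)"
    "j < dim_col (if b = c then mat_unit d a e else 0\<^sub>m d d)"
  then have ij: "i < d" "j < d" by (auto split: if_splits)
  have "(mat_unit d a b * mat_unit d c e) $$ (i,j)
      = (\<Sum>k<d. (if i = a \<and> k = b then 1 else 0) * (if k = c \<and> j = e then 1 else 0))"
    using ij by (simp add: index_mult_mat_sum[OF mat_unit_carrier mat_unit_carrier ij])
  also have "\<dots> = (\<Sum>k<d. if k = b then (if i = a \<and> b = c \<and> j = e then 1 else 0) else 0)"
    by (rule sum.cong) auto
  finally show "(mat_unit d a b * mat_unit d c e) $$ (i,j) = (if b = c then mat_unit d a e else 0\<^sub>m d d) $$ (i,j)"
    using assms ij by simp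
qed auto

lemma lie_bracket_mat_unit:
  assumes "a < d" "b < d" "e < d" "a \<noteq> e"
  shows "lie_bracket (mat_unit d a b) (mat_unit d b e) = mat_unit d a e"
  using assms by (auto simp: mat_unit_mult intro!: eq_matI)

lemma traceless_eq_mat_unit_lincomb:
  assumes A: "A \<in> carrier_mat d d" "trace A = 0" and d: "0 < d"
  shows "A = mat d d (\<lambda>ij. \<Sum>p\<in>{(a, b). a < d \<and> b < d \<and> a \<noteq> b}. A $$ p * mat_unit d (fst p) (snd p) $$ ij)
    + mat d d (\<lambda>ij. \<Sum>k\<in>{1..<d}. A $$ (k,k) * lie_bracket (mat_unit d k 0) (mat_unit d 0 k) $$ ij)"
    (is "A = mat d d (\<lambda>ij. \<Sum>p\<in>?OD. _) + mat d d (\<lambda>ij. \<Sum>k\<in>_. A $$ (k,k) * ?H k $$ ij)")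
proof (rule eq_matI)
  fix i j assume "i < dim_row (mat d d (\<lambda>ij. \<Sum>p\<in>?OD. A $$ p * mat_unit d (fst p) (snd p) $$ ij)
    + mat d d (\<lambda>ij. \<Sum>k\<in>{1..<d}. A $$ (k,k) * ?H k $$ ij))"
    "j < dim_col (mat d d (\<lambda>ij. \<Sum>p\<in>?OD. A $$ p * mat_unit d (fst p) (snd p) $$ ij)
    + mat d d (\<lambda>ij. \<Sum>k\<in>{1..<d}. A $$ (k,k) * ?H k $$ ij))"
  then have ij: "i < d" "j < d" by auto
  have "finite ?OD" by (rule finite_subset[of _ "{..<d} \<times> {..<d}"]) auto
  have "(\<Sum>p\<in>?OD. A $$ p * mat_unit d (fst p) (snd p) $$ (i,j)) = (\<Sum>p\<in>?OD. if p = (i,j) then A $$ p else 0)"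
    using ij by (intro sum.cong) auto
  then have off: "(\<Sum>p\<in>?OD. A $$ p * mat_unit d (fst p) (snd p) $$ (i,j)) = (if i = j then 0 else A $$ (i,j))"
    using \<open>finite ?OD\<close> ij by simp
  have "A $$ (k,k) * ?H k $$ (i,j) =
      (if i = j \<and> k = i then A $$ (k,k) else 0) - (if i = j \<and> i = 0 then A $$ (k,k) else 0)"
    if "k \<in> {1..<d}" for k
    using that ij by (simp add: mat_unit_mult index_lie_bracket[of _ d])
  then have "(\<Sum>k\<in>{1..<d}. A $$ (k,k) * ?H k $$ (i,j)) = (\<Sum>k\<in>{1..<d}.
      (if i = j \<and> k = i then A $$ (k,k) else 0) - (if i = j \<and> i = 0 then A $$ (k,k) else 0))"
    by (rule sum.cong[OF refl])
  then have diag: "(\<Sum>k\<in>{1..<d}. A $$ (k,k) * ?H k $$ (i,j))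
      = (if i = j then (if i = 0 then - (\<Sum>k\<in>{1..<d}. A $$ (k,k)) else A $$ (i,i)) else 0)"
    using ij by (cases "i = j"; cases "i = 0") (simp_all add: sum_subtractf sum.delta sum_negf)
  have "A $$ (0,0) = - (\<Sum>k\<in>{1..<d}. A $$ (k,k))"
    using A d by (simp add: trace_def atLeast1_lessThan_eq_remove0 sum.remove[of "{..<d}" 0] eq_neg_iff_add_eq_0)
  then show "A $$ (i,j) = (mat d d (\<lambda>ij. \<Sum>p\<in>?OD. A $$ p * mat_unit d (fst p) (snd p) $$ ij)
    + mat d d (\<lambda>ij. \<Sum>k\<in>{1..<d}. A $$ (k,k) * ?H k $$ ij)) $$ (i,j)"
    using ij off diag by auto
qed (use A in auto)

section \<open>Complex matrix Lie algebras\<close>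

locale complex_matrix_lie_algebra =
  fixes d :: nat and M :: "complex mat set"
  assumes carrier: "M \<subseteq> carrier_mat d d"
    and zero_closed: "0\<^sub>m d d \<in> M"
    and add_closed: "A \<in> M \<Longrightarrow> B \<in> M \<Longrightarrow> A + B \<in> M"
    and smult_closed: "A \<in> M \<Longrightarrow> c \<cdot>\<^sub>m A \<in> M"
    and bracket_closed: "A \<in> M \<Longrightarrow> B \<in> M \<Longrightarrow> lie_bracket A B \<in> M"
begin

lemma mem_carrier: "A \<in> M \<Longrightarrow> A \<in> carrier_mat d d"
  using carrier by blast

lemma mem_if_entries_eq:
  assumes "A \<in> M" "B \<in> carrier_mat d d" "\<And>i j. i < d \<Longrightarrow> j < d \<Longrightarrow> B $$ (i,j) = A $$ (i,j)"
  shows "B \<in> M"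
proof -
  have "B = A" using assms mem_carrier[OF assms(1)] by (intro eq_matI) auto
  then show ?thesis using assms(1) by simp
qed

lemma ad_pow_closed: "A \<in> M \<Longrightarrow> X \<in> M \<Longrightarrow> (lie_bracket A ^^ n) X \<in> M"
  by (induction n) (auto intro: bracket_closed)

end

definition complexification :: "nat \<Rightarrow> complex mat set \<Rightarrow> complex mat set" where
  "complexification d S = {X + \<i> \<cdot>\<^sub>m Y | X Y. X \<in> lie_generated d S \<and> Y \<in> lie_generated d S}"

lemma lie_generated_carrier:
  assumes "S \<subseteq> carrier_mat d d" shows "lie_generated d S \<subseteq> carrier_mat d d"
proof
  fix A assume "A \<in> lie_generated d S"
  then show "A \<in> carrier_mat d d" by induction (use assms in auto)
qed

lemma lie_generated_diff:
  assumes "S \<subseteq> carrier_mat d d" "A \<in> lie_generated d S" "B \<in> lie_generated d S"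
  shows "A - B \<in> lie_generated d S"
proof -
  have "A + complex_of_real (-1) \<cdot>\<^sub>m B \<in> lie_generated d S"
    using assms by (intro lie_generated.add lie_generated.scale)
  moreover have "A + complex_of_real (-1) \<cdot>\<^sub>m B = A - B"
    using assms lie_generated_carrier by (intro eq_matI) auto
  ultimately show ?thesis by simp
qed

lemma smult_complex_decomposition:
  assumes "X \<in> carrier_mat d d" "Y \<in> carrier_mat d d"
  shows "c \<cdot>\<^sub>m (X + \<i> \<cdot>\<^sub>m Y) =
    (complex_of_real (Re c) \<cdot>\<^sub>m X - complex_of_real (Im c) \<cdot>\<^sub>m Y)
    + \<i> \<cdot>\<^sub>m (complex_of_real (Im c) \<cdot>\<^sub>m X + complex_of_real (Re c) \<cdot>\<^sub>m Y)"
proof -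
  have "c * (x + \<i> * y) = (complex_of_real (Re c) * x - complex_of_real (Im c) * y)
      + \<i> * (complex_of_real (Im c) * x + complex_of_real (Re c) * y)" for x y
    by (subst (1) complex_eq[of c]) (simp add: algebra_simps)
  then show ?thesis using assms by (intro eq_matI) simp_all
qed

lemma lie_bracket_complex_decomposition:
  assumes "X1 \<in> carrier_mat d d" "Y1 \<in> carrier_mat d d" "X2 \<in> carrier_mat d d" "Y2 \<in> carrier_mat d d"
  shows "lie_bracket (X1 + \<i> \<cdot>\<^sub>m Y1) (X2 + \<i> \<cdot>\<^sub>m Y2) =
    (lie_bracket X1 X2 - lie_bracket Y1 Y2) + \<i> \<cdot>\<^sub>m (lie_bracket X1 Y2 + lie_bracket Y1 X2)"
  using assms
  by (intro eq_matI)
     (simp_all add: index_mult_mat scalar_prod_def algebra_simps sum.distrib sum_subtractf sum_distrib_left)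

lemma complexificationI:
  "X \<in> lie_generated d S \<Longrightarrow> Y \<in> lie_generated d S \<Longrightarrow> X + \<i> \<cdot>\<^sub>m Y \<in> complexification d S"
  unfolding complexification_def by blast

lemma complexification_lie_algebra:
  assumes S: "S \<subseteq> carrier_mat d d"
  shows "complex_matrix_lie_algebra d (complexification d S)"
proof
  let ?L = "lie_generated d S"
  have car: "A \<in> ?L \<Longrightarrow> A \<in> carrier_mat d d" for A using lie_generated_carrier[OF S] by auto
  have diff: "A \<in> ?L \<Longrightarrow> B \<in> ?L \<Longrightarrow> A - B \<in> ?L" for A B by (rule lie_generated_diff[OF S])
  show "complexification d S \<subseteq> carrier_mat d d"
    unfolding complexification_def using car by auto
  have "0\<^sub>m d d = 0\<^sub>m d d + \<i> \<cdot>\<^sub>m 0\<^sub>m d d" by (intro eq_matI) auto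
  also have "\<dots> \<in> complexification d S" by (intro complexificationI lie_generated.zero)
  finally show "0\<^sub>m d d \<in> complexification d S" .
  fix A B assume "A \<in> complexification d S" "B \<in> complexification d S"
  then obtain X1 Y1 X2 Y2 where A: "A = X1 + \<i> \<cdot>\<^sub>m Y1" "X1 \<in> ?L" "Y1 \<in> ?L"
    and B: "B = X2 + \<i> \<cdot>\<^sub>m Y2" "X2 \<in> ?L" "Y2 \<in> ?L"
    unfolding complexification_def by blast
  have "A + B = (X1 + X2) + \<i> \<cdot>\<^sub>m (Y1 + Y2)"
    using car[OF A(2)] car[OF A(3)] car[OF B(2)] car[OF B(3)] unfolding A(1) B(1)
    by (intro eq_matI) (simp_all add: algebra_simps)
  then show "A + B \<in> complexification d S"
    using A B by (simp add: complexificationI lie_generated.add)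
  show "c \<cdot>\<^sub>m A \<in> complexification d S" for c
    unfolding A(1) smult_complex_decomposition[OF car car, OF A(2,3)]
    by (intro complexificationI diff lie_generated.add lie_generated.scale A(2,3))
  show "lie_bracket A B \<in> complexification d S"
    unfolding A(1) B(1) lie_bracket_complex_decomposition[OF car car car car, OF A(2,3) B(2,3)]
    by (intro complexificationI diff lie_generated.add lie_generated.bracket A(2,3) B(2,3))
qed

lemma complexification_mem_if_generator:
  assumes S: "S \<subseteq> carrier_mat d d" and A: "- \<i> \<cdot>\<^sub>m A \<in> S"
  shows "A \<in> complexification d S"
proof -
  have "dim_row A = d" "dim_col A = d" using carrier_matD[OF subsetD[OF S A]] by simp_all
  then have "A = 0\<^sub>m d d + \<i> \<cdot>\<^sub>m (- \<i> \<cdot>\<^sub>m A)" by (intro eq_matI) simp_all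
  moreover have "0\<^sub>m d d + \<i> \<cdot>\<^sub>m (- \<i> \<cdot>\<^sub>m A) \<in> complexification d S"
    by (rule complexificationI[OF lie_generated.zero lie_generated.gen[OF A]])
  ultimately show ?thesis by simp
qed

lemma lie_generated_eq_su:
  assumes S: "S \<subseteq> su d"
    and traceless: "\<And>A. A \<in> carrier_mat d d \<Longrightarrow> trace A = 0 \<Longrightarrow> A \<in> complexification d S"
  shows "lie_generated d S = su d"
proof
  show L: "lie_generated d S \<subseteq> su d" by (rule lie_generated_subset_su[OF S])
  show "su d \<subseteq> lie_generated d S"
  proof
    fix A assume A: "A \<in> su d"
    then have "A \<in> complexification d S" by (intro traceless) (auto simp: su_def)
    then obtain X Y where XY: "A = X + \<i> \<cdot>\<^sub>m Y" "X \<in> lie_generated d S" "Y \<in> lie_generated d S"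
      unfolding complexification_def by blast
    have "A = X"
      by (rule anti_hermitian_decomposition_unique[OF XY(1) _ _ A]) (use XY L in auto)
    with XY show "A \<in> lie_generated d S" by simp
  qed
qed

context complex_matrix_lie_algebra
begin

lemma lincomb_closed:
  assumes "finite P" "\<And>p. p \<in> P \<Longrightarrow> B p \<in> M"
  shows "mat d d (\<lambda>ij. \<Sum>p\<in>P. c p * B p $$ ij) \<in> M"
  using assms
proof (induction rule: finite_induct)
  case empty
  show ?case by (rule mem_if_entries_eq[OF zero_closed]) auto
next
  case (insert p P)
  have sum: "c p \<cdot>\<^sub>m B p + mat d d (\<lambda>ij. \<Sum>p\<in>P. c p * B p $$ ij) \<in> M"
    using insert by (intro add_closed smult_closed) auto
  have "B p \<in> carrier_mat d d" using insert.prems mem_carrier by blast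
  then show ?case
    by (intro mem_if_entries_eq[OF sum]) (use insert in auto)
qed

lemma ad_diag_poly_closed:
  assumes D: "mat_diag d g \<in> M" and X: "X \<in> M" and "finite S"
  shows "mat d d (\<lambda>(i,j). X $$ (i,j) * (\<Prod>\<mu>\<in>S. g i - g j - \<mu>)) \<in> M"
  using \<open>finite S\<close>
proof induction
  case empty
  show ?case by (rule mem_if_entries_eq[OF X]) auto
next
  case (insert \<mu> S)
  let ?Y = "mat d d (\<lambda>(i,j). X $$ (i,j) * (\<Prod>\<mu>\<in>S. g i - g j - \<mu>))"
  have "lie_bracket (mat_diag d g) ?Y + (- \<mu>) \<cdot>\<^sub>m ?Y \<in> M"
    using insert.IH D by (intro add_closed smult_closed bracket_closed)
  then show ?case
    by (rule mem_if_entries_eq) (use insert.hyps in \<open>auto simp: mat_diag_mult_index mult_mat_diag_index algebra_simps\<close>)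
qed

text \<open>Projection onto the eigenvalue \<open>c\<close> of \<open>ad (diag g)\<close>, by a Lagrange interpolation polynomial.\<close>
lemma ad_diag_eigencomponent_closed:
  assumes D: "mat_diag d g \<in> M" and X: "X \<in> M"
  shows "mat d d (\<lambda>(i,j). if g i - g j = c then X $$ (i,j) else 0) \<in> M"
proof -
  define L where "L = (\<lambda>(i,j). g i - g j) ` ({..<d} \<times> {..<d}) - {c}"
  have L: "finite L" "c \<notin> L" unfolding L_def by auto
  define \<pi> where "\<pi> = (\<Prod>\<mu>\<in>L. c - \<mu>)"
  have "\<pi> \<noteq> 0" unfolding \<pi>_def using L by auto
  have "(1 / \<pi>) \<cdot>\<^sub>m mat d d (\<lambda>(i,j). X $$ (i,j) * (\<Prod>\<mu>\<in>L. g i - g j - \<mu>)) \<in> M"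
    by (intro smult_closed ad_diag_poly_closed[OF D X L(1)])
  then show ?thesis
  proof (rule mem_if_entries_eq)
    fix i j assume ij: "i < d" "j < d"
    show "mat d d (\<lambda>(i,j). if g i - g j = c then X $$ (i,j) else 0) $$ (i,j) =
      ((1 / \<pi>) \<cdot>\<^sub>m mat d d (\<lambda>(i,j). X $$ (i,j) * (\<Prod>\<mu>\<in>L. g i - g j - \<mu>))) $$ (i,j)"
    proof (cases "g i - g j = c")
      case True then show ?thesis using ij \<open>\<pi> \<noteq> 0\<close> by (simp add: \<pi>_def)
    next
      case False
      then have "g i - g j \<in> L" unfolding L_def using ij by auto
      then have "(\<Prod>\<mu>\<in>L. g i - g j - \<mu>) = 0" using L by (intro prod_zero) auto
      then show ?thesis using ij False by simp
    qed
  qed simp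
qed

lemma mat_unit_closed:
  assumes lower: "\<And>k. k + 1 < d \<Longrightarrow> mat_unit d (k + 1) k \<in> M"
    and upper: "\<And>k. k + 1 < d \<Longrightarrow> mat_unit d k (k + 1) \<in> M"
    and ij: "i < d" "j < d" "i \<noteq> j"
  shows "mat_unit d i j \<in> M"
proof -
  have below: "mat_unit d (j + n + 1) j \<in> M" if "j + n + 1 < d" for j n
    using that
  proof (induction n arbitrary: j)
    case (Suc n)
    then have "lie_bracket (mat_unit d (j + n + 2) (j + n + 1)) (mat_unit d (j + n + 1) j) \<in> M"
      using lower[of "j + n + 1"] by (intro bracket_closed) (auto simp: add.assoc)
    then show ?case using Suc.prems by (simp add: lie_bracket_mat_unit)
  qed (use lower in simp)
  have above: "mat_unit d j (j + n + 1) \<in> M" if "j + n + 1 < d" for j n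
    using that
  proof (induction n arbitrary: j)
    case (Suc n)
    then have "lie_bracket (mat_unit d j (j + n + 1)) (mat_unit d (j + n + 1) (j + n + 2)) \<in> M"
      using upper[of "j + n + 1"] by (intro bracket_closed) (auto simp: add.assoc)
    then show ?case using Suc.prems by (simp add: lie_bracket_mat_unit)
  qed (use upper in simp)
  show ?thesis
  proof (cases "j < i")
    case True
    then obtain n where "i = j + n + 1" using less_imp_Suc_add by fastforce
    then show ?thesis using below ij by blast
  next
    case False
    then obtain n where "j = i + n + 1" using ij less_imp_Suc_add[of i j] by fastforce
    then show ?thesis using above ij by blast
  qed
qed

lemma traceless_closed:
  assumes lower: "\<And>k. k + 1 < d \<Longrightarrow> mat_unit d (k + 1) k \<in> M"
    and upper: "\<And>k. k + 1 < d \<Longrightarrow> mat_unit d k (k + 1) \<in> M"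
    and A: "A \<in> carrier_mat d d" "trace A = 0"
  shows "A \<in> M"
proof (cases "d = 0")
  case True
  then have "A = 0\<^sub>m d d" using A by (intro eq_matI) auto
  then show ?thesis using zero_closed by simp
next
  case False
  have "finite {(a, b). a < d \<and> b < d \<and> a \<noteq> b}"
    by (rule finite_subset[of _ "{..<d} \<times> {..<d}"]) auto
  with False show ?thesis
    by (subst traceless_eq_mat_unit_lincomb[OF A])
      (auto intro!: add_closed lincomb_closed bracket_closed mat_unit_closed[OF lower upper])
qed

end

section \<open>The spin operators\<close>

definition ladder_coeff :: "nat \<Rightarrow> nat \<Rightarrow> complex" where
  "ladder_coeff d k = complex_of_real (sqrt (real ((d - 1 - k) * (k + 1))))"

lemma ladder_coeff_sq: "ladder_coeff d k * ladder_coeff d k = of_nat ((d - 1 - k) * (k + 1))"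
  unfolding ladder_coeff_def of_real_mult[symmetric] by simp

lemma ladder_coeff_nonzero:
  assumes "k + 1 < d" shows "ladder_coeff d k \<noteq> 0"
proof -
  have "(d - 1 - k) * (k + 1) \<noteq> 0" using assms by simp
  then show ?thesis unfolding ladder_coeff_def by (simp only: of_real_eq_0_iff real_sqrt_eq_zero_cancel_iff of_nat_eq_0_iff not_False_eq_True)
qed

lemma cnj_ladder_coeff[simp]: "cnj (ladder_coeff d k) = ladder_coeff d k"
  by (simp add: ladder_coeff_def)

lemma spin_ladder_radicand:
  assumes "k < d"
  shows "spinJ d * (spinJ d + 1) - mval d k * (mval d k + 1) = real ((d - 1 - k) * (k + 1))"
  using assms by (simp add: spinJ_def mval_def of_nat_diff field_simps)

lemma Jplus_carrier[simp]: "Jplus d \<in> carrier_mat d d"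
  by (simp add: Jplus_def)

lemma Jminus_carrier[simp]: "Jminus d \<in> carrier_mat d d"
  by (simp add: Jminus_def Jplus_def dagger_def)

lemma J_dims[simp]:
  "dim_row (Jplus d) = d" "dim_col (Jplus d) = d" "dim_row (Jminus d) = d" "dim_col (Jminus d) = d"
  by (simp_all add: Jminus_def Jplus_def)

lemma index_Jplus: "i < d \<Longrightarrow> j < d \<Longrightarrow> Jplus d $$ (i,j) = (if i = j + 1 then ladder_coeff d j else 0)"
  by (simp add: Jplus_def ladder_coeff_def spin_ladder_radicand)

lemma index_Jminus: "i < d \<Longrightarrow> j < d \<Longrightarrow> Jminus d $$ (i,j) = (if j = i + 1 then ladder_coeff d i else 0)"
  by (auto simp: Jminus_def index_Jplus)

lemma sum_single_nonzero:
  fixes f :: "nat \<Rightarrow> complex"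
  assumes "\<And>l. l < d \<Longrightarrow> l \<noteq> k \<Longrightarrow> f l = 0"
  shows "(\<Sum>l<d. f l) = (if k < d then f k else 0)"
proof -
  have "(\<Sum>l<d. f l) = (\<Sum>l<d. if l = k then f k else 0)"
    using assms by (intro sum.cong) auto
  then show ?thesis by simp
qed

lemma Jplus_mult_index:
  "X \<in> carrier_mat d d \<Longrightarrow> i < d \<Longrightarrow> j < d \<Longrightarrow>
    (Jplus d * X) $$ (i,j) = (if i \<ge> 1 then ladder_coeff d (i - 1) * X $$ (i - 1, j) else 0)"
  by (auto simp: index_mult_mat_sum[of "Jplus d" d d X d] index_Jplus sum_single_nonzero[where k = "i - 1"])

lemma mult_Jplus_index:
  "X \<in> carrier_mat d d \<Longrightarrow> i < d \<Longrightarrow> j < d \<Longrightarrow>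
    (X * Jplus d) $$ (i,j) = (if j + 1 < d then X $$ (i, j + 1) * ladder_coeff d j else 0)"
  by (auto simp: index_mult_mat_sum[of X d d "Jplus d" d] index_Jplus sum_single_nonzero[where k = "j + 1"])

lemma Jminus_mult_index:
  "X \<in> carrier_mat d d \<Longrightarrow> i < d \<Longrightarrow> j < d \<Longrightarrow>
    (Jminus d * X) $$ (i,j) = (if i + 1 < d then ladder_coeff d i * X $$ (i + 1, j) else 0)"
  by (auto simp: index_mult_mat_sum[of "Jminus d" d d X d] index_Jminus sum_single_nonzero[where k = "i + 1"])

lemma mult_Jminus_index:
  "X \<in> carrier_mat d d \<Longrightarrow> i < d \<Longrightarrow> j < d \<Longrightarrow>
    (X * Jminus d) $$ (i,j) = (if j \<ge> 1 then X $$ (i, j - 1) * ladder_coeff d (j - 1) else 0)"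
  by (auto simp: index_mult_mat_sum[of X d d "Jminus d" d] index_Jminus sum_single_nonzero[where k = "j - 1"])

lemma lie_bracket_Jplus_Jminus:
  "lie_bracket (Jplus d) (Jminus d) = mat_diag d (\<lambda>i. 2 * of_nat i - of_nat (d - 1))"
proof (rule eq_matI)
  fix i j assume "i < dim_row (mat_diag d (\<lambda>i. 2 * of_nat i - of_nat (d - 1)))"
    "j < dim_col (mat_diag d (\<lambda>i. 2 * of_nat i - of_nat (d - 1)))"
  then have ij: "i < d" "j < d" by auto
  have lower: "(if i \<ge> 1 then ladder_coeff d (i - 1) * ladder_coeff d (i - 1) else 0)
      = of_nat d * of_nat i - of_nat i * of_nat i"
  proof (cases i)
    case (Suc n)
    then have "(of_nat (d - 1 - n) :: complex) = of_nat d - 1 - of_nat n" using ij by (simp add: of_nat_diff)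
    then have "ladder_coeff d n * ladder_coeff d n = (of_nat d - 1 - of_nat n) * (of_nat n + 1)"
      unfolding ladder_coeff_sq of_nat_mult by simp
    then show ?thesis using Suc by (simp add: algebra_simps)
  qed simp
  have upper: "(if i + 1 < d then ladder_coeff d i * ladder_coeff d i else 0)
      = (of_nat d - 1 - of_nat i) * (of_nat i + 1)"
  proof -
    have "(of_nat (d - 1 - i) :: complex) = of_nat d - 1 - of_nat i" using ij by (simp add: of_nat_diff)
    then have "ladder_coeff d i * ladder_coeff d i = (of_nat d - 1 - of_nat i) * (of_nat i + 1)"
      unfolding ladder_coeff_sq of_nat_mult by simp
    moreover have "d = i + 1" if "\<not> i + 1 < d" using that ij by simp
    ultimately show ?thesis by auto
  qed
  show "lie_bracket (Jplus d) (Jminus d) $$ (i,j) = mat_diag d (\<lambda>i. 2 * of_nat i - of_nat (d - 1)) $$ (i,j)"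
  proof (cases "i = j")
    case True
    then have "lie_bracket (Jplus d) (Jminus d) $$ (i,j)
        = (if i \<ge> 1 then ladder_coeff d (i - 1) * ladder_coeff d (i - 1) else 0)
          - (if i + 1 < d then ladder_coeff d i * ladder_coeff d i else 0)"
      using ij by (simp add: Jplus_mult_index Jminus_mult_index index_Jplus index_Jminus)
    then show ?thesis unfolding lower upper using ij True by (simp add: of_nat_diff algebra_simps)
  qed (use ij in \<open>simp add: Jplus_mult_index Jminus_mult_index index_Jplus index_Jminus\<close>)
qed auto

lemma Jx_carrier[simp]: "Jx d \<in> carrier_mat d d"
  by (simp add: Jx_def)

lemma Jy_carrier[simp]: "Jy d \<in> carrier_mat d d"
  unfolding Jy_def by (meson Jminus_carrier Jplus_carrier minus_carrier_mat smult_carrier_mat)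

lemma Jplus_eq: "Jplus d = Jx d + \<i> \<cdot>\<^sub>m Jy d"
  by (intro eq_matI) (auto simp: Jx_def Jy_def field_simps)

lemma Jminus_eq: "Jminus d = Jx d + (- \<i>) \<cdot>\<^sub>m Jy d"
  by (intro eq_matI) (auto simp: Jx_def Jy_def field_simps)

lemma hermitian_traceless_su:
  assumes "A \<in> carrier_mat d d" "hermitian A" "trace A = 0"
  shows "- \<i> \<cdot>\<^sub>m A \<in> su d"
  using assms by (auto simp: su_def hermitian_def dagger_smult trace_smult intro!: eq_matI)

lemma Jx_hermitian: "hermitian (Jx d)"
  unfolding hermitian_def Jx_def Jminus_def
  by (intro eq_matI) (auto simp: Jplus_def)

lemma Jy_hermitian: "hermitian (Jy d)"
  unfolding hermitian_def Jy_def Jminus_def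
  by (intro eq_matI) (auto simp: Jplus_def)

lemma Jx_traceless: "trace (Jx d) = 0"
  by (simp add: trace_def Jx_def index_Jplus index_Jminus)

lemma Jy_traceless: "trace (Jy d) = 0"
  by (simp add: trace_def Jy_def index_Jplus index_Jminus)

definition band :: "nat \<Rightarrow> int \<Rightarrow> complex mat \<Rightarrow> complex mat" where
  "band d p X = mat d d (\<lambda>(i,j). if int i - int j = p then X $$ (i,j) else 0)"

lemma band_carrier[simp]: "band d p X \<in> carrier_mat d d"
  by (simp add: band_def)

lemma band_dims[simp]: "dim_row (band d p X) = d" "dim_col (band d p X) = d"
  by (simp_all add: band_def)

lemma trace_band_mult:
  assumes X: "X \<in> carrier_mat d d" and W: "W \<in> carrier_mat d d"
    and W_band: "\<And>i j. i < d \<Longrightarrow> j < d \<Longrightarrow> int i - int j \<noteq> - p \<Longrightarrow> W $$ (i,j) = 0"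
  shows "trace (band d p X * W) = trace (X * W)"
proof -
  have "(band d p X * W) $$ (i,i) = (X * W) $$ (i,i)" if "i < d" for i
    using that assms by (auto simp: band_def index_mult_mat_sum[of _ d d] intro!: sum.cong)
  then show ?thesis using assms by (simp add: trace_def)
qed

locale spin_lie_algebra = complex_matrix_lie_algebra +
  assumes Jplus_mem: "Jplus d \<in> M" and Jminus_mem: "Jminus d \<in> M"
begin

lemma band_closed:
  assumes "X \<in> M" shows "band d p X \<in> M"
proof -
  have "lie_bracket (Jplus d) (Jminus d) \<in> M" by (intro bracket_closed Jplus_mem Jminus_mem)
  then have "mat d d (\<lambda>(i,j). if (2 * of_nat i - of_nat (d - 1)) - (2 * of_nat j - of_nat (d - 1))
      = (2 * of_int p :: complex) then X $$ (i,j) else 0) \<in> M"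
    unfolding lie_bracket_Jplus_Jminus by (rule ad_diag_eigencomponent_closed[OF _ assms])
  moreover have "((2 * of_nat i - of_nat (d - 1)) - (2 * of_nat j - of_nat (d - 1)) = (2 * of_int p :: complex))
      \<longleftrightarrow> int i - int j = p" for i j
  proof -
    have "((2 * of_nat i - of_nat (d - 1)) - (2 * of_nat j - of_nat (d - 1)) = (2 * of_int p :: complex))
        \<longleftrightarrow> (of_int (2 * (int i - int j)) = (of_int (2 * p) :: complex))" by simp
    also have "\<dots> \<longleftrightarrow> int i - int j = p" by (simp only: of_int_eq_iff) presburger
    finally show ?thesis .
  qed
  ultimately show ?thesis by (simp add: band_def)
qed

lemma diag_closed:
  assumes "X \<in> M" shows "mat_diag d (\<lambda>i. X $$ (i,i)) \<in> M"
proof -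
  have "band d 0 X = mat_diag d (\<lambda>i. X $$ (i,i))"
    by (intro eq_matI) (auto simp: band_def)
  then show ?thesis using band_closed[OF assms, of 0] by simp
qed

end

lemma spin_lie_algebra_complexification:
  assumes S: "S \<subseteq> carrier_mat d d" and "- \<i> \<cdot>\<^sub>m Jx d \<in> S" "- \<i> \<cdot>\<^sub>m Jy d \<in> S"
  shows "spin_lie_algebra d (complexification d S)"
proof -
  interpret complex_matrix_lie_algebra d "complexification d S"
    by (rule complexification_lie_algebra[OF S])
  have "Jx d \<in> complexification d S" "Jy d \<in> complexification d S"
    using assms by (auto intro: complexification_mem_if_generator)
  then have "Jplus d \<in> complexification d S" "Jminus d \<in> complexification d S"
    unfolding Jplus_eq Jminus_eq by (auto intro: add_closed smult_closed)
  then show ?thesis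
    by (intro spin_lie_algebra.intro complexification_lie_algebra[OF S] spin_lie_algebra_axioms.intro)
qed

section \<open>The Casimir operator on diagonal matrices\<close>

text \<open>The diagonal of \<open>[J\<^sub>+, [J\<^sub>-, diag f]]\<close> in spin \<open>N/2\<close> (lemma \<open>diag_lie_bracket_Jplus_Jminus\<close>);
  the coefficients are squared ladder coefficients.\<close>
definition casimir :: "nat \<Rightarrow> (nat \<Rightarrow> complex) \<Rightarrow> nat \<Rightarrow> complex" where
  "casimir N f x = of_nat ((N + 1 - x) * x) * (f x - f (x - 1)) - of_nat ((N - x) * (x + 1)) * (f (x + 1) - f x)"

definition casimir_eigenvalue :: "nat \<Rightarrow> complex" where
  "casimir_eigenvalue k = of_nat (k * (k + 1))"

definition casimir_shift :: "nat \<Rightarrow> complex \<Rightarrow> (nat \<Rightarrow> complex) \<Rightarrow> nat \<Rightarrow> complex" where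
  "casimir_shift N a f = (\<lambda>x. casimir N f x - a * f x)"

definition casimir_poly :: "nat \<Rightarrow> nat list \<Rightarrow> (nat \<Rightarrow> complex) \<Rightarrow> nat \<Rightarrow> complex" where
  "casimir_poly N ks f = foldr (\<lambda>k. casimir_shift N (casimir_eigenvalue k)) ks f"

definition agree_upto :: "nat \<Rightarrow> (nat \<Rightarrow> complex) \<Rightarrow> (nat \<Rightarrow> complex) \<Rightarrow> bool" where
  "agree_upto N f g \<longleftrightarrow> (\<forall>x\<le>N. f x = g x)"

definition falling_fact :: "nat \<Rightarrow> nat \<Rightarrow> complex" where
  "falling_fact n x = (\<Prod>i<n. of_nat x - of_nat i)"

lemma casimir_poly_Nil[simp]: "casimir_poly N [] f = f"
  by (simp add: casimir_poly_def)

lemma casimir_poly_Cons[simp]: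
  "casimir_poly N (k # ks) f = casimir_shift N (casimir_eigenvalue k) (casimir_poly N ks f)"
  by (simp add: casimir_poly_def)

lemma casimir_poly_append: "casimir_poly N (xs @ ys) f = casimir_poly N xs (casimir_poly N ys f)"
  by (simp add: casimir_poly_def)

lemma casimir_const[simp]: "casimir N (\<lambda>_. c) x = 0"
  by (simp add: casimir_def)

lemma casimir_lincomb: "casimir N (\<lambda>x. a * f x + b * g x) x = a * casimir N f x + b * casimir N g x"
  by (simp add: casimir_def algebra_simps)

lemma casimir_diff: "casimir N (\<lambda>x. f x - b * g x) x = casimir N f x - b * casimir N g x"
  by (simp add: casimir_def algebra_simps)

lemma casimir_agree: "agree_upto N f g \<Longrightarrow> x \<le> N \<Longrightarrow> casimir N f x = casimir N g x"
  by (cases "x = N") (simp_all add: casimir_def agree_upto_def)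

lemma casimir_shift_lincomb:
  "casimir_shift N c (\<lambda>x. a * f x + b * g x) = (\<lambda>x. a * casimir_shift N c f x + b * casimir_shift N c g x)"
  by (rule ext) (simp add: casimir_shift_def casimir_lincomb algebra_simps)

lemma casimir_shift_agree: "agree_upto N f g \<Longrightarrow> agree_upto N (casimir_shift N c f) (casimir_shift N c g)"
  by (simp add: agree_upto_def casimir_shift_def casimir_agree)

lemma casimir_shift_commute: "casimir_shift N a (casimir_shift N b g) = casimir_shift N b (casimir_shift N a g)"
proof
  fix x
  have "casimir_shift N a (casimir_shift N b g) x = casimir N (casimir N g) x - (a + b) * casimir N g x + a * b * g x"
    by (simp add: casimir_shift_def casimir_diff algebra_simps)
  also have "\<dots> = casimir_shift N b (casimir_shift N a g) x"
    by (simp add: casimir_shift_def casimir_diff algebra_simps)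
  finally show "casimir_shift N a (casimir_shift N b g) x = casimir_shift N b (casimir_shift N a g) x" .
qed

lemma casimir_poly_lincomb:
  "casimir_poly N ks (\<lambda>x. a * f x + b * g x) = (\<lambda>x. a * casimir_poly N ks f x + b * casimir_poly N ks g x)"
  by (induction ks) (simp_all add: casimir_shift_lincomb)

lemma casimir_poly_agree: "agree_upto N f g \<Longrightarrow> agree_upto N (casimir_poly N ks f) (casimir_poly N ks g)"
  by (induction ks) (simp_all add: casimir_shift_agree)

lemma casimir_poly_sum:
  "finite J \<Longrightarrow> casimir_poly N ks (\<lambda>x. \<Sum>j\<in>J. c j * g j x) = (\<lambda>x. \<Sum>j\<in>J. c j * casimir_poly N ks (g j) x)"
proof (induction J rule: finite_induct)
  case empty
  have "casimir_poly N ks (\<lambda>x. 0 * f x + 0 * f x) = (\<lambda>x. 0)" for f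
    unfolding casimir_poly_lincomb by simp
  then show ?case by simp
next
  case (insert j J)
  then show ?case
    using casimir_poly_lincomb[of N ks "c j" "g j" 1 "\<lambda>x. \<Sum>j\<in>J. c j * g j x"] by simp
qed

lemma falling_fact_0[simp]: "falling_fact 0 = (\<lambda>_. 1)"
  by (rule ext) (simp add: falling_fact_def)

lemma falling_fact_Suc_0[simp]: "falling_fact (Suc m) 0 = 0"
  unfolding falling_fact_def by (rule prod_zero) auto

lemma falling_fact_Suc: "falling_fact (Suc m) x = falling_fact m x * (of_nat x - of_nat m)"
  by (simp add: falling_fact_def)

lemma falling_fact_Suc_Suc: "falling_fact (Suc m) (Suc x) = of_nat (Suc x) * falling_fact m x"
  unfolding falling_fact_def prod.lessThan_Suc_shift by simp

lemma falling_fact_eq_0: "x < n \<Longrightarrow> falling_fact n x = 0"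
  unfolding falling_fact_def by (rule prod_zero) auto

lemma falling_fact_self_nonzero: "falling_fact n n \<noteq> 0"
  unfolding falling_fact_def by (auto simp: prod_zero_iff)

lemma falling_fact_forward_diff:
  "falling_fact (Suc m) (Suc x) - falling_fact (Suc m) x = of_nat (Suc m) * falling_fact m x"
  unfolding falling_fact_Suc_Suc by (simp add: falling_fact_Suc algebra_simps)

lemma falling_fact_backward_diff:
  "of_nat x * (falling_fact n x - falling_fact n (x - 1)) = of_nat n * falling_fact n x"
proof (cases n)
  case n: (Suc m)
  show ?thesis
  proof (cases x)
    case (Suc y)
    show ?thesis
      unfolding n Suc diff_Suc_1 falling_fact_forward_diff by (simp add: falling_fact_Suc_Suc)
  qed (simp add: n)
qed simp

lemma casimir_falling_fact:
  assumes "x \<le> N"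
  shows "casimir N (falling_fact (Suc m)) x = casimir_eigenvalue (Suc m) * falling_fact (Suc m) x
     - of_nat (Suc m) * of_nat (Suc m) * (of_nat N - of_nat m) * falling_fact m x"
proof -
  let ?n = "Suc m" and ?f = "falling_fact (Suc m)"
  have down: "of_nat ((N + 1 - x) * x) * (?f x - ?f (x - 1)) = (of_nat N + 1 - of_nat x) * (of_nat ?n * ?f x)"
    using assms falling_fact_backward_diff[of x ?n] by (simp add: of_nat_diff mult.assoc)
  have "(of_nat ((N - x) * (x + 1)) :: complex) = (of_nat N - of_nat x) * of_nat (x + 1)"
    by (simp only: of_nat_mult of_nat_diff[OF assms])
  moreover have "of_nat (x + 1) * (?f (x + 1) - ?f x) = of_nat ?n * ?f (x + 1)"
    using falling_fact_backward_diff[of "x + 1" ?n] by simp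
  ultimately have up: "of_nat ((N - x) * (x + 1)) * (?f (x + 1) - ?f x) = (of_nat N - of_nat x) * (of_nat ?n * ?f (x + 1))"
    by (simp only: mult.assoc)
  have step: "?f (x + 1) = ?f x + of_nat ?n * falling_fact m x"
    using falling_fact_forward_diff[of m x] by (simp add: algebra_simps)
  have shift: "of_nat x * falling_fact m x = ?f x + of_nat m * falling_fact m x"
    by (simp add: falling_fact_Suc algebra_simps)
  have "casimir N ?f x = (of_nat N + 1 - of_nat x) * (of_nat ?n * ?f x)
      - (of_nat N - of_nat x) * (of_nat ?n * ?f (x + 1))"
    unfolding casimir_def down up ..
  also have "\<dots> = (of_nat N + 1 - of_nat x) * (of_nat ?n * ?f x)
      - (of_nat N - of_nat x) * (of_nat ?n * (?f x + of_nat ?n * falling_fact m x))"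
    unfolding step ..
  also have "\<dots> = of_nat ?n * ?f x - of_nat ?n * of_nat ?n * of_nat N * falling_fact m x
      + of_nat ?n * of_nat ?n * (of_nat x * falling_fact m x)"
    by (simp add: algebra_simps)
  finally show ?thesis
    unfolding shift casimir_eigenvalue_def by (simp add: algebra_simps)
qed

lemma casimir_shift_falling_fact_triangular:
  "\<exists>c. agree_upto N (casimir_shift N a (falling_fact j))
     (\<lambda>x. (casimir_eigenvalue j - a) * falling_fact j x + c * falling_fact (j - 1) x)"
proof (cases j)
  case 0
  then show ?thesis
    by (intro exI[of _ 0]) (simp add: agree_upto_def casimir_shift_def casimir_eigenvalue_def)
next
  case (Suc m)
  then show ?thesis
    by (intro exI[of _ "- (of_nat (Suc m) * of_nat (Suc m) * (of_nat N - of_nat m))"])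
      (simp add: agree_upto_def casimir_shift_def casimir_falling_fact algebra_simps)
qed

lemma casimir_poly_falling_fact_vanish:
  "j \<le> n \<Longrightarrow> agree_upto N (casimir_poly N [0..<Suc n] (falling_fact j)) (\<lambda>x. 0)"
proof (induction n arbitrary: j)
  case 0
  then show ?case
    by (simp add: agree_upto_def casimir_shift_def casimir_eigenvalue_def)
next
  case (Suc n)
  let ?P = "casimir_poly N [0..<Suc n]" and ?a = "casimir_eigenvalue (Suc n)"
  obtain c where "agree_upto N (casimir_shift N ?a (falling_fact j))
      (\<lambda>x. (casimir_eigenvalue j - ?a) * falling_fact j x + c * falling_fact (j - 1) x)"
    using casimir_shift_falling_fact_triangular by blast
  then have "agree_upto N (?P (casimir_shift N ?a (falling_fact j)))
      (\<lambda>x. (casimir_eigenvalue j - ?a) * ?P (falling_fact j) x + c * ?P (falling_fact (j - 1)) x)"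
    by (subst casimir_poly_lincomb[symmetric]) (rule casimir_poly_agree)
  moreover have "casimir_poly N [0..<Suc (Suc n)] (falling_fact j) = ?P (casimir_shift N ?a (falling_fact j))"
    by (simp only: upt_Suc_append[of 0 "Suc n"] le0 casimir_poly_append casimir_poly_Cons casimir_poly_Nil)
  moreover have "(casimir_eigenvalue j - ?a) * ?P (falling_fact j) x = 0" if "x \<le> N" for x
    using Suc.IH[of j] Suc.prems that by (cases "j = Suc n") (auto simp: agree_upto_def)
  moreover have "?P (falling_fact (j - 1)) x = 0" if "x \<le> N" for x
    using Suc.IH[of "j - 1"] Suc.prems that by (auto simp: agree_upto_def)
  ultimately show ?case by (simp add: agree_upto_def)
qed

lemma falling_fact_expansion: "\<exists>c. \<forall>x\<le>K. f x = (\<Sum>j\<le>K. c j * falling_fact j x)"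
proof (induction K)
  case 0 then show ?case by (intro exI[of _ "\<lambda>_. f 0"]) simp
next
  case (Suc K)
  then obtain c where c: "\<forall>x\<le>K. f x = (\<Sum>j\<le>K. c j * falling_fact j x)" by blast
  define s where "s = (\<Sum>j\<le>K. c j * falling_fact j (Suc K))"
  define c' where "c' = c(Suc K := (f (Suc K) - s) / falling_fact (Suc K) (Suc K))"
  have "f x = (\<Sum>j\<le>Suc K. c' j * falling_fact j x)" if x: "x \<le> Suc K" for x
  proof -
    have e: "(\<Sum>j\<le>Suc K. c' j * falling_fact j x)
        = (\<Sum>j\<le>K. c j * falling_fact j x) + c' (Suc K) * falling_fact (Suc K) x"
      by (simp add: c'_def)
    show ?thesis
    proof (cases "x = Suc K")
      case True then show ?thesis unfolding e using falling_fact_self_nonzero[of "Suc K"] by (simp add: c'_def s_def)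
    next
      case False then show ?thesis unfolding e using c x falling_fact_eq_0[of x "Suc K"] by simp
    qed
  qed
  then show ?case by blast
qed

lemma casimir_poly_annihilates: "agree_upto N (casimir_poly N [0..<Suc N] f) (\<lambda>x. 0)"
proof -
  let ?P = "casimir_poly N [0..<Suc N]"
  obtain c where "agree_upto N f (\<lambda>x. \<Sum>j\<le>N. c j * falling_fact j x)"
    using falling_fact_expansion unfolding agree_upto_def by blast
  then have "agree_upto N (?P f) (\<lambda>x. \<Sum>j\<le>N. c j * ?P (falling_fact j) x)"
    using casimir_poly_agree casimir_poly_sum[of "{..N}"] by fastforce
  moreover have "?P (falling_fact j) x = 0" if "j \<le> N" "x \<le> N" for j x
    using casimir_poly_falling_fact_vanish that unfolding agree_upto_def by blast
  ultimately show ?thesis by (simp add: agree_upto_def)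
qed

text \<open>Up to a constant factor the diagonal of \<open>T\<^sup>(\<^sup>2\<^sup>)\<^sub>0\<close> in spin \<open>N/2\<close>, see \<open>mat_diag_quadrupole_eq_spin_tensor\<close>.\<close>
definition quadrupole :: "nat \<Rightarrow> nat \<Rightarrow> complex" where
  "quadrupole N x = 6 * (of_nat x)\<^sup>2 - 6 * of_nat N * of_nat x + of_nat N * (of_nat N - 1)"

lemma casimir_quadrupole:
  assumes "x \<le> N" shows "casimir N (quadrupole N) x = 6 * quadrupole N x"
proof (cases x)
  case 0 then show ?thesis by (simp add: casimir_def quadrupole_def algebra_simps power2_eq_square)
next
  case (Suc y)
  have e: "(of_nat ((N + 1 - x) * x) :: complex) = (of_nat N + 1 - of_nat x) * of_nat x"
    "(of_nat ((N - x) * (x + 1)) :: complex) = (of_nat N - of_nat x) * (of_nat x + 1)"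
    using assms unfolding of_nat_mult by (simp_all add: of_nat_diff)
  show ?thesis
    unfolding casimir_def e unfolding quadrupole_def Suc by (simp add: algebra_simps power2_eq_square)
qed

text \<open>A solution of \<open>C u = 6 u\<close> is determined by \<open>u 0\<close>, since the recurrence can be solved for \<open>u (x + 2)\<close>.\<close>
lemma casimir_eigenfunction_vanish:
  assumes N: "N \<ge> 2" and eig: "\<And>x. x \<le> N \<Longrightarrow> casimir N u x = 6 * u x" and u0: "u 0 = 0"
    and x: "x \<le> N"
  shows "u x = 0"
proof -
  have "u x = 0 \<and> u (x + 1) = 0" if "x + 1 \<le> N" for x
    using that
  proof (induction x)
    case 0
    have "casimir N u 0 = - (of_nat N * (u 1 - u 0))" unfolding casimir_def by simp
    then have "of_nat N * u 1 = 0" using u0 eig[of 0] by simp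
    then show ?case using u0 N by simp
  next
    case (Suc x)
    then have prev: "u x = 0" "u (x + 1) = 0" by auto
    have "casimir N u (x + 1) = - (of_nat ((N - (x + 1)) * (x + 2)) * u (x + 2))"
      unfolding casimir_def using prev by (simp add: numeral_2_eq_2)
    then have "of_nat ((N - (x + 1)) * (x + 2)) * u (x + 2) = 0"
      using prev eig[of "x + 1"] Suc.prems by simp
    moreover have "(N - (x + 1)) * (x + 2) \<noteq> 0" using Suc.prems by simp
    ultimately have "u (x + 2) = 0" by (metis mult_eq_0_iff of_nat_eq_0_iff)
    then show ?case using prev by simp
  qed
  then show ?thesis using u0 x by (cases x) auto
qed

lemma casimir_eigenfunction_unique:
  assumes N: "N \<ge> 2" and eig: "\<And>x. x \<le> N \<Longrightarrow> casimir N g x = 6 * g x" and x: "x \<le> N"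
  shows "g x = (g 0 / quadrupole N 0) * quadrupole N x"
proof -
  define c where "c = g 0 / quadrupole N 0"
  have "quadrupole N 0 = of_nat (N * (N - 1))" using N by (simp add: quadrupole_def of_nat_diff)
  then have "quadrupole N 0 \<noteq> 0" using N by simp
  then have u0: "g 0 - c * quadrupole N 0 = 0" unfolding c_def by simp
  have "casimir N (\<lambda>x. g x - c * quadrupole N x) x = 6 * (g x - c * quadrupole N x)" if "x \<le> N" for x
    unfolding casimir_diff eig[OF that] casimir_quadrupole[OF that] by (simp add: algebra_simps)
  from casimir_eigenfunction_vanish[OF N this, of x] u0 x show ?thesis
    unfolding c_def by simp
qed

definition pairing :: "nat \<Rightarrow> (nat \<Rightarrow> complex) \<Rightarrow> (nat \<Rightarrow> complex) \<Rightarrow> complex" where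
  "pairing N f g = (\<Sum>x\<le>N. f x * g x)"

text \<open>Summation by parts.\<close>
lemma pairing_casimir_dirichlet_form:
  "pairing (Suc M) (casimir (Suc M) f) g =
    (\<Sum>x\<le>M. of_nat ((Suc M - x) * (x + 1)) * (f (x + 1) - f x) * (g (x + 1) - g x))"
proof -
  define e where "e x = of_nat ((Suc M - x) * (x + 1)) * (f (x + 1) - f x)" for x
  have "casimir (Suc M) f x = (if x = 0 then 0 else e (x - 1)) - e x" for x
    by (cases x) (simp_all add: casimir_def e_def algebra_simps)
  then have "pairing (Suc M) (casimir (Suc M) f) g
      = (\<Sum>x\<le>Suc M. (if x = 0 then 0 else e (x - 1)) * g x) - (\<Sum>x\<le>Suc M. e x * g x)"
    unfolding pairing_def by (simp add: sum_subtractf left_diff_distrib)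
  also have "(\<Sum>x\<le>Suc M. (if x = 0 then 0 else e (x - 1)) * g x) = (\<Sum>x\<le>M. e x * g (Suc x))"
    by (subst sum.atMost_Suc_shift) simp
  also have "(\<Sum>x\<le>Suc M. e x * g x) = (\<Sum>x\<le>M. e x * g x)"
    by (simp add: e_def)
  finally show ?thesis
    by (simp add: e_def sum_subtractf[symmetric] algebra_simps)
qed

lemma pairing_casimir_sym:
  assumes "N \<ge> 1" shows "pairing N (casimir N f) g = pairing N f (casimir N g)"
proof -
  obtain M where M: "N = Suc M" using assms by (cases N) auto
  have "pairing N (casimir N f) g = pairing N (casimir N g) f"
    unfolding M pairing_casimir_dirichlet_form by (simp add: algebra_simps)
  then show ?thesis by (simp add: pairing_def mult.commute)
qed

lemma pairing_casimir_shift_sym: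
  "N \<ge> 1 \<Longrightarrow> pairing N (casimir_shift N a f) g = pairing N f (casimir_shift N a g)"
  using pairing_casimir_sym[of N f g]
  by (simp add: pairing_def casimir_shift_def left_diff_distrib right_diff_distrib sum_subtractf
      sum_distrib_left mult.assoc mult.left_commute)

lemma pairing_casimir_poly_quadrupole:
  assumes "N \<ge> 1"
  shows "pairing N (casimir_poly N ks f) (quadrupole N) =
    (\<Prod>k\<leftarrow>ks. 6 - casimir_eigenvalue k) * pairing N f (quadrupole N)"
proof (induction ks)
  case (Cons k ks)
  let ?g = "casimir_poly N ks f" and ?a = "casimir_eigenvalue k"
  have "pairing N (casimir_shift N ?a ?g) (quadrupole N) = pairing N ?g (casimir_shift N ?a (quadrupole N))"
    by (rule pairing_casimir_shift_sym[OF assms])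
  also have "\<dots> = (\<Sum>x\<le>N. ?g x * ((6 - ?a) * quadrupole N x))"
    unfolding pairing_def casimir_shift_def by (intro sum.cong) (simp_all add: casimir_quadrupole left_diff_distrib)
  also have "\<dots> = (6 - ?a) * pairing N ?g (quadrupole N)"
    by (simp add: pairing_def sum_distrib_left mult.left_commute)
  finally show ?case using Cons by simp
qed simp

lemma casimir_eigenvalue_eq_6_iff: "casimir_eigenvalue k = 6 \<longleftrightarrow> k = 2"
proof
  assume "casimir_eigenvalue k = 6"
  then have e: "k * (k + 1) = 6"
    unfolding casimir_eigenvalue_def by (metis of_nat_eq_iff of_nat_numeral)
  have "k < 3"
  proof (rule ccontr)
    assume "\<not> k < 3"
    then have "3 * 4 \<le> k * (k + 1)" by (intro mult_mono) auto
    then show False using e by simp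
  qed
  then show "k = 2" using e by (auto simp: less_Suc_eq numeral_3_eq_3)
qed (simp add: casimir_eigenvalue_def)

text \<open>Removing the factor \<open>C - 6\<close> from the characteristic polynomial projects onto the
  eigenvalue \<open>6\<close>; the projection of \<open>f\<close> is nonzero as it has the same pairing with
  \<open>quadrupole N\<close> as \<open>f\<close> up to a nonzero factor.\<close>
lemma casimir_poly_quadrupole_projection:
  assumes N: "N \<ge> 2" and f: "pairing N f (quadrupole N) \<noteq> 0"
  shows "\<exists>c. c \<noteq> 0 \<and> agree_upto N (casimir_poly N ([0, 1] @ [3..<Suc N]) f) (\<lambda>x. c * quadrupole N x)"
proof -
  define w where "w = casimir_poly N ([0, 1] @ [3..<Suc N]) f"
  have "[0..<Suc N] = [0..<3] @ [3..<Suc N]"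
    using N upt_add_eq_append[of 0 3 "Suc N - 3"] by simp
  also have "[0..<3] = [0, 1, 2]" by (simp add: numeral_3_eq_3)
  finally have "[0..<Suc N] = [0, 1, 2] @ [3..<Suc N]" .
  then have w_eq: "casimir_shift N (casimir_eigenvalue 2) w = casimir_poly N [0..<Suc N] f"
    unfolding w_def
    by (simp only: casimir_poly_append casimir_poly_Cons casimir_poly_Nil append_Cons append_Nil
        casimir_shift_commute[of N "casimir_eigenvalue 2"])
  have eig: "casimir N w x = 6 * w x" if "x \<le> N" for x
    using fun_cong[OF w_eq, of x] casimir_poly_annihilates[of N f] that
    by (simp add: agree_upto_def casimir_shift_def casimir_eigenvalue_def)
  define c where "c = w 0 / quadrupole N 0"
  have w: "w x = c * quadrupole N x" if "x \<le> N" for x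
    unfolding c_def by (rule casimir_eigenfunction_unique[OF N eig that])
  have "pairing N w (quadrupole N) = (\<Prod>k\<leftarrow>[0, 1] @ [3..<Suc N]. 6 - casimir_eigenvalue k) * pairing N f (quadrupole N)"
    unfolding w_def using N by (intro pairing_casimir_poly_quadrupole) simp
  also have "\<dots> \<noteq> 0"
    using f by (auto simp: prod_list_zero_iff casimir_eigenvalue_eq_6_iff)
  finally have "c \<noteq> 0"
    unfolding pairing_def using w by (metis (no_types, lifting) atMost_iff mult_zero_left sum.neutral)
  then show ?thesis using w unfolding w_def agree_upto_def by blast
qed

lemma diag_lie_bracket_Jplus_Jminus:
  assumes i: "i < d"
  shows "lie_bracket (Jplus d) (lie_bracket (Jminus d) (mat_diag d f)) $$ (i,i) = casimir (d - 1) f i"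
proof -
  define Z where "Z = lie_bracket (Jminus d) (mat_diag d f)"
  have Z: "Z \<in> carrier_mat d d" unfolding Z_def by (simp add: lie_bracket_carrier)
  have Z_index: "Z $$ (a,b) = (if b = a + 1 then ladder_coeff d a * (f b - f a) else 0)" if "a < d" "b < d" for a b
    using that unfolding Z_def
    by (auto simp: Jminus_mult_index mult_mat_diag_index mult_Jminus_index mat_diag_mult_index index_Jminus
        algebra_simps)
  have "lie_bracket (Jplus d) Z $$ (i,i)
      = (if i \<ge> 1 then ladder_coeff d (i - 1) * ladder_coeff d (i - 1) * (f i - f (i - 1)) else 0)
      - (if i + 1 < d then ladder_coeff d i * ladder_coeff d i * (f (i + 1) - f i) else 0)"
    using i by (simp add: index_lie_bracket[OF Jplus_carrier Z i i] Jplus_mult_index[OF Z] mult_Jplus_index[OF Z] Z_index)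
  also have "\<dots> = casimir (d - 1) f i"
  proof -
    have "(if i \<ge> 1 then ladder_coeff d (i - 1) * ladder_coeff d (i - 1) * (f i - f (i - 1)) else 0)
        = of_nat ((d - 1 + 1 - i) * i) * (f i - f (i - 1))"
      by (cases i) (simp_all add: ladder_coeff_sq)
    moreover have "(if i + 1 < d then ladder_coeff d i * ladder_coeff d i * (f (i + 1) - f i) else 0)
        = of_nat ((d - 1 - i) * (i + 1)) * (f (i + 1) - f i)"
      using i by (cases "i + 1 < d") (simp_all add: ladder_coeff_sq)
    ultimately show ?thesis by (simp only: casimir_def)
  qed
  finally show ?thesis unfolding Z_def .
qed

context spin_lie_algebra
begin

lemma casimir_closed:
  assumes "mat_diag d f \<in> M" shows "mat_diag d (casimir (d - 1) f) \<in> M"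
proof -
  have "lie_bracket (Jplus d) (lie_bracket (Jminus d) (mat_diag d f)) \<in> M"
    using assms by (intro bracket_closed Jplus_mem Jminus_mem)
  then have "mat_diag d (\<lambda>i. lie_bracket (Jplus d) (lie_bracket (Jminus d) (mat_diag d f)) $$ (i,i)) \<in> M"
    by (rule diag_closed)
  moreover have "mat_diag d (\<lambda>i. lie_bracket (Jplus d) (lie_bracket (Jminus d) (mat_diag d f)) $$ (i,i))
      = mat_diag d (casimir (d - 1) f)"
    by (intro eq_matI) (simp_all add: diag_lie_bracket_Jplus_Jminus del: index_minus_mat)
  ultimately show ?thesis by simp
qed

lemma casimir_poly_closed:
  assumes "mat_diag d f \<in> M" shows "mat_diag d (casimir_poly (d - 1) ks f) \<in> M"
proof (induction ks)
  case (Cons k ks)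
  have "mat_diag d (casimir (d - 1) (casimir_poly (d - 1) ks f))
      + (- casimir_eigenvalue k) \<cdot>\<^sub>m mat_diag d (casimir_poly (d - 1) ks f) \<in> M"
    using Cons.IH by (intro add_closed smult_closed casimir_closed)
  moreover have "mat_diag d (casimir (d - 1) (casimir_poly (d - 1) ks f))
      + (- casimir_eigenvalue k) \<cdot>\<^sub>m mat_diag d (casimir_poly (d - 1) ks f)
      = mat_diag d (casimir_poly (d - 1) (k # ks) f)"
    by (intro eq_matI) (auto simp: casimir_shift_def)
  ultimately show ?case by simp
qed (use assms in simp)

lemma quadrupole_closed:
  assumes f: "mat_diag d f \<in> M" and d: "d \<ge> 3" and pairing: "pairing (d - 1) f (quadrupole (d - 1)) \<noteq> 0"
  shows "mat_diag d (quadrupole (d - 1)) \<in> M"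
proof -
  let ?ks = "[0, 1] @ [3..<d]"
  have N: "d - 1 \<ge> 2" and d1: "Suc (d - 1) = d" using d by simp_all
  from casimir_poly_quadrupole_projection[OF N pairing, unfolded d1] obtain c where c: "c \<noteq> 0"
    "agree_upto (d - 1) (casimir_poly (d - 1) ?ks f) (\<lambda>x. c * quadrupole (d - 1) x)"
    by blast
  have "(1 / c) \<cdot>\<^sub>m mat_diag d (casimir_poly (d - 1) ?ks f) \<in> M"
    by (intro smult_closed casimir_poly_closed[OF f])
  moreover have "(1 / c) \<cdot>\<^sub>m mat_diag d (casimir_poly (d - 1) ?ks f) = mat_diag d (quadrupole (d - 1))"
    using c by (intro eq_matI) (auto simp: agree_upto_def)
  ultimately show ?thesis by simp
qed

text \<open>Projecting \<open>J\<^sub>\<plusminus>\<close> onto the eigenvalues of \<open>ad (diag g)\<close> isolates its entries one at a time.\<close>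
lemma adjacent_mat_units_closed:
  assumes D: "mat_diag d g \<in> M"
    and gaps: "\<And>j k. g (j + 1) - g j = g (k + 1) - g k \<Longrightarrow> j = k"
    and k: "k + 1 < d"
  shows "mat_unit d (k + 1) k \<in> M" "mat_unit d k (k + 1) \<in> M"
proof -
  let ?c = "g (k + 1) - g k"
  have c: "ladder_coeff d k \<noteq> 0" by (rule ladder_coeff_nonzero[OF k])
  have "(1 / ladder_coeff d k) \<cdot>\<^sub>m mat d d (\<lambda>(i,j). if g i - g j = ?c then Jplus d $$ (i,j) else 0) \<in> M"
    by (intro smult_closed ad_diag_eigencomponent_closed[OF D Jplus_mem])
  then show "mat_unit d (k + 1) k \<in> M"
  proof (rule mem_if_entries_eq)
    fix i j assume ij: "i < d" "j < d"
    show "mat_unit d (k + 1) k $$ (i,j) = ((1 / ladder_coeff d k) \<cdot>\<^sub>m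
        mat d d (\<lambda>(i,j). if g i - g j = ?c then Jplus d $$ (i,j) else 0)) $$ (i,j)"
      using ij c gaps[of j k] by (auto simp: index_Jplus)
  qed simp
  have "(1 / ladder_coeff d k) \<cdot>\<^sub>m mat d d (\<lambda>(i,j). if g i - g j = - ?c then Jminus d $$ (i,j) else 0) \<in> M"
    by (intro smult_closed ad_diag_eigencomponent_closed[OF D Jminus_mem])
  then show "mat_unit d k (k + 1) \<in> M"
  proof (rule mem_if_entries_eq)
    fix i j assume ij: "i < d" "j < d"
    have "g i - g (i + 1) = - ?c \<longleftrightarrow> g (i + 1) - g i = ?c" by (metis minus_diff_eq neg_equal_iff_equal)
    then have "g i - g (i + 1) = - ?c \<longleftrightarrow> i = k" using gaps[of i k] by auto
    then show "mat_unit d k (k + 1) $$ (i,j) = ((1 / ladder_coeff d k) \<cdot>\<^sub>m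
        mat d d (\<lambda>(i,j). if g i - g j = - ?c then Jminus d $$ (i,j) else 0)) $$ (i,j)"
      using ij c by (auto simp: index_Jminus)
  qed simp
qed

lemma quadrupole_gaps_distinct:
  "quadrupole N (j + 1) - quadrupole N j = quadrupole N (k + 1) - quadrupole N k \<Longrightarrow> j = k"
  by (simp add: quadrupole_def power2_eq_square algebra_simps)

lemma traceless_closed_if_quadrupole_pairing:
  assumes "mat_diag d f \<in> M" "d \<ge> 3" "pairing (d - 1) f (quadrupole (d - 1)) \<noteq> 0"
    and "A \<in> carrier_mat d d" "trace A = 0"
  shows "A \<in> M"
proof (rule traceless_closed)
  have D: "mat_diag d (quadrupole (d - 1)) \<in> M" by (rule quadrupole_closed[OF assms(1-3)])
  show "mat_unit d (k + 1) k \<in> M" "mat_unit d k (k + 1) \<in> M" if "k + 1 < d" for k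
    using adjacent_mat_units_closed[OF D quadrupole_gaps_distinct that] by auto
qed (use assms in auto)

end

section \<open>Clebsch--Gordan coefficients of rank 2\<close>

lemma rfact_nat[simp]: "rfact (real n) = fact n"
  by (simp add: rfact_def)

lemma rfact_int: "rfact (real_of_int k) = fact (nat k)"
  by (simp add: rfact_def)

lemma fact_reduce_1: "n \<ge> 1 \<Longrightarrow> (fact n :: real) = real n * fact (n - 1)"
  by (simp add: fact_reduce)

lemma fact_reduce_2: "n \<ge> 2 \<Longrightarrow> (fact n :: real) = real n * real (n - 1) * fact (n - 2)"
  by (auto simp: numeral_2_eq_2 fact_Suc dest!: le_Suc_ex)

lemma sqrt_mult_square: "c \<ge> 0 \<Longrightarrow> sqrt (k * c\<^sup>2) = sqrt k * (c::real)"
  by (simp add: real_sqrt_mult)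

text \<open>The square-root prefactor of Racah's formula for \<open>j\<^sub>1 = 2\<close> and \<open>j\<^sub>2 = j = N/2\<close>.\<close>
definition cg2_norm :: "nat \<Rightarrow> real" where
  "cg2_norm N = sqrt ((real N + 1) * 2 * fact (N - 2) * 2 / fact (N + 3))"

lemma cg2_norm_pos: "cg2_norm N > 0"
  unfolding cg2_norm_def by simp

text \<open>The sum in Racah's formula for \<open>\<langle>N/2, y - N/2 | 2, q; N/2, x - N/2\<rangle>\<close>, \<open>y = x + q\<close>.\<close>
definition racah_term :: "int \<Rightarrow> nat \<Rightarrow> nat \<Rightarrow> nat \<Rightarrow> real" where
  "racah_term q N x t = (-1) ^ t / (fact t * fact (2 - t) * fact (nat (2 - q - int t)) * fact (x - t)
     * fact (nat (q + int t)) * fact (N + t - x - 2))"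

definition racah_sum :: "int \<Rightarrow> nat \<Rightarrow> nat \<Rightarrow> real" where
  "racah_sum q N x = (\<Sum>t \<in> {t \<in> {0..2}. int t \<le> 2 - q \<and> t \<le> x \<and> 0 \<le> q + int t \<and> x + 2 \<le> N + t}.
     racah_term q N x t)"

lemma racah_sum_expand:
  "racah_sum q N x =
    (if 0 \<le> 2 - q \<and> 0 \<le> q \<and> x + 2 \<le> N then racah_term q N x 0 else 0)
    + (if 1 \<le> 2 - q \<and> 1 \<le> x \<and> 0 \<le> q + 1 \<and> x + 1 \<le> N then racah_term q N x 1 else 0)
    + (if 2 \<le> 2 - q \<and> 2 \<le> x \<and> 0 \<le> q + 2 \<and> x \<le> N then racah_term q N x 2 else 0)"
  unfolding racah_sum_def
  by (subst sum.inter_filter) (simp_all add: numeral_2_eq_2 atLeast0_atMost_Suc)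

context
  fixes N x y :: nat and q :: int
  assumes N: "N \<ge> 2" and x: "x \<le> N" and y: "y \<le> N" and yq: "int y = int x + q" and q: "-2 \<le> q" "q \<le> 2"
begin

lemma clebsch_gordan_2_admissible:
  "real y - real N / 2 = real_of_int q + (real x - real N / 2) \<and> \<bar>real_of_int q\<bar> \<le> 2
    \<and> \<bar>real x - real N / 2\<bar> \<le> real N / 2 \<and> \<bar>real y - real N / 2\<bar> \<le> real N / 2
    \<and> \<bar>2 - real N / 2\<bar> \<le> real N / 2 \<and> real N / 2 \<le> 2 + real N / 2 \<and> 2 + real N / 2 + real N / 2 \<in> \<int>
    \<and> 2 - real_of_int q \<in> \<int> \<and> 2 + real_of_int q \<in> \<int>
    \<and> real N / 2 - (real x - real N / 2) \<in> \<int> \<and> real N / 2 + (real x - real N / 2) \<in> \<int>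
    \<and> real N / 2 - (real y - real N / 2) \<in> \<int> \<and> real N / 2 + (real y - real N / 2) \<in> \<int>"
proof -
  have "real y = real x + real_of_int q" using yq by (metis of_int_add of_int_of_nat_eq)
  moreover have "real x \<le> real N" "real y \<le> real N" "2 \<le> real N" "\<bar>real_of_int q\<bar> \<le> 2"
    using x y N q by auto
  ultimately show ?thesis
    by (auto simp: abs_if intro: Ints_add Ints_diff Ints_of_nat Ints_of_int)
qed

lemma racah_sum_eq_rfact:
  "(\<Sum>t \<in> {t \<in> {0..nat \<lfloor>2 + real N / 2 - real N / 2\<rfloor>}. real t \<le> 2 - real_of_int q
      \<and> real t \<le> real N / 2 + (real x - real N / 2) \<and> 0 \<le> real N / 2 - real N / 2 + real_of_int q + real t
      \<and> 0 \<le> real N / 2 - 2 - (real x - real N / 2) + real t}.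
    (-1) ^ t / (fact t * rfact (2 + real N / 2 - real N / 2 - real t) * rfact (2 - real_of_int q - real t)
      * rfact (real N / 2 + (real x - real N / 2) - real t) * rfact (real N / 2 - real N / 2 + real_of_int q + real t)
      * rfact (real N / 2 - 2 - (real x - real N / 2) + real t)))
  = racah_sum q N x"
  unfolding racah_sum_def
proof (rule sum.cong)
  have "real t \<le> 2 - real_of_int q \<longleftrightarrow> int t \<le> 2 - q" for t
    by (metis of_int_le_iff of_int_of_nat_eq of_int_diff of_int_numeral)
  moreover have "0 \<le> real N / 2 - real N / 2 + real_of_int q + real t \<longleftrightarrow> 0 \<le> q + int t" for t
    by (metis add.commute diff_self of_int_0_le_iff of_int_add of_int_of_nat_eq add_0)
  moreover have "0 \<le> real N / 2 - 2 - (real x - real N / 2) + real t \<longleftrightarrow> x + 2 \<le> N + t" for t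
    by linarith
  ultimately show "{t \<in> {0..nat \<lfloor>2 + real N / 2 - real N / 2\<rfloor>}. real t \<le> 2 - real_of_int q
      \<and> real t \<le> real N / 2 + (real x - real N / 2) \<and> 0 \<le> real N / 2 - real N / 2 + real_of_int q + real t
      \<and> 0 \<le> real N / 2 - 2 - (real x - real N / 2) + real t}
    = {t \<in> {0..2}. int t \<le> 2 - q \<and> t \<le> x \<and> 0 \<le> q + int t \<and> x + 2 \<le> N + t}"
    by simp
next
  fix t assume "t \<in> {t \<in> {0..2}. int t \<le> 2 - q \<and> t \<le> x \<and> 0 \<le> q + int t \<and> x + 2 \<le> N + t}"
  then have "2 + real N / 2 - real N / 2 - real t = real (2 - t)"
    and "2 - real_of_int q - real t = real_of_int (2 - q - int t)"
    and "real N / 2 + (real x - real N / 2) - real t = real (x - t)"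
    and "real N / 2 - real N / 2 + real_of_int q + real t = real_of_int (q + int t)"
    and "real N / 2 - 2 - (real x - real N / 2) + real t = real (N + t - x - 2)"
    by (simp_all add: of_nat_diff)
  then show "(-1) ^ t / (fact t * rfact (2 + real N / 2 - real N / 2 - real t) * rfact (2 - real_of_int q - real t)
      * rfact (real N / 2 + (real x - real N / 2) - real t) * rfact (real N / 2 - real N / 2 + real_of_int q + real t)
      * rfact (real N / 2 - 2 - (real x - real N / 2) + real t)) = racah_term q N x t"
    unfolding racah_term_def by (simp only: rfact_nat rfact_int)
qed

lemma clebsch_gordan_2_racah:
  "clebsch_gordan 2 (of_int q) (real N / 2) (real x - real N / 2) (real N / 2) (real y - real N / 2) =
    cg2_norm N * sqrt (fact y * fact (N - y) * fact (nat (2 - q)) * fact (nat (2 + q)) * fact (N - x) * fact x)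
    * racah_sum q N x"
proof -
  let ?J = "real N / 2"
  have prefactor: "sqrt ((2 * ?J + 1) * rfact (?J + 2 - ?J) * rfact (?J - 2 + ?J) * rfact (2 + ?J - ?J) / rfact (2 + ?J + ?J + 1))
      = cg2_norm N"
  proof -
    have "?J + 2 - ?J = real 2" "2 + ?J - ?J = real 2" "2 + ?J + ?J + 1 = real (N + 3)" "2 * ?J + 1 = real N + 1"
      and "?J - 2 + ?J = real (N - 2)" using N by (simp_all add: of_nat_diff)
    then show ?thesis unfolding cg2_norm_def by (simp only: rfact_nat) simp
  qed
  moreover have fact_prod: "sqrt (rfact (?J + (real y - ?J)) * rfact (?J - (real y - ?J)) * rfact (2 - real_of_int q)
      * rfact (2 + real_of_int q) * rfact (?J - (real x - ?J)) * rfact (?J + (real x - ?J)))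
    = sqrt (fact y * fact (N - y) * fact (nat (2 - q)) * fact (nat (2 + q)) * fact (N - x) * fact x)"
  proof -
    have "?J + (real y - ?J) = real y" "?J + (real x - ?J) = real x"
      and "?J - (real y - ?J) = real (N - y)" "?J - (real x - ?J) = real (N - x)"
      and "2 - real_of_int q = real_of_int (2 - q)" "2 + real_of_int q = real_of_int (2 + q)"
      using x y by (simp_all add: of_nat_diff)
    then show ?thesis by (simp only: rfact_nat rfact_int)
  qed
  ultimately show ?thesis
    by (simp only: clebsch_gordan_def if_P[OF clebsch_gordan_2_admissible] racah_sum_eq_rfact)
qed

end

lemma racah_sum_minus_2: "N = a + b + 2 \<Longrightarrow> racah_sum (-2) N (a + 2) * (fact a * fact b) = 1 / 4"
  by (simp add: racah_sum_expand racah_term_def fact_numeral)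

lemma racah_sum_2: "N = a + b + 2 \<Longrightarrow> racah_sum 2 N a * (fact a * fact b) = 1 / 4"
  by (simp add: racah_sum_expand racah_term_def fact_numeral)

lemma racah_sum_minus_1:
  assumes N: "N = a + b + 1"
  shows "racah_sum (-1) N (a + 1) * (fact a * fact b) = (real a - real b) / 2"
proof -
  have "racah_term (-1) N (a + 1) 1 * (fact a * fact b) = - real b / 2" if "1 \<le> b"
    using N fact_reduce_1[OF that] by (simp add: racah_term_def)
  moreover have "racah_term (-1) N (a + 1) 2 * (fact a * fact b) = real a / 2" if "1 \<le> a"
    using N fact_reduce_1[OF that] by (simp add: racah_term_def numeral_3_eq_3)
  ultimately show ?thesis
    using N by (cases "1 \<le> a"; cases "1 \<le> b") (simp_all add: racah_sum_expand algebra_simps)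
qed

lemma racah_sum_1:
  assumes N: "N = a + b + 1"
  shows "racah_sum 1 N a * (fact a * fact b) = (real b - real a) / 2"
proof -
  have "racah_term 1 N a 0 * (fact a * fact b) = real b / 2" if "1 \<le> b"
    using N fact_reduce_1[OF that] by (simp add: racah_term_def)
  moreover have "racah_term 1 N a 1 * (fact a * fact b) = - real a / 2" if "1 \<le> a"
    using N fact_reduce_1[OF that] by (simp add: racah_term_def)
  ultimately show ?thesis
    using N by (cases "1 \<le> a"; cases "1 \<le> b") (simp_all add: racah_sum_expand algebra_simps)
qed

lemma racah_sum_0:
  assumes N: "N = a + b"
  shows "racah_sum 0 N a * (fact a * fact b) = real b * (real b - 1) / 4 - real a * real b + real a * (real a - 1) / 4"
proof -
  have "(if 2 \<le> b then racah_term 0 N a 0 else 0) * (fact a * fact b) = real b * (real b - 1) / 4"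
    using N fact_reduce_2[of b] by (cases "2 \<le> b") (auto simp: racah_term_def of_nat_diff not_le less_2_cases_iff)
  moreover have "(if 1 \<le> a \<and> 1 \<le> b then racah_term 0 N a 1 else 0) * (fact a * fact b) = - (real a * real b)"
    using N fact_reduce_1[of a] fact_reduce_1[of b] by (auto simp: racah_term_def)
  moreover have "(if 2 \<le> a then racah_term 0 N a 2 else 0) * (fact a * fact b) = real a * (real a - 1) / 4"
    using N fact_reduce_2[of a] by (cases "2 \<le> a") (auto simp: racah_term_def of_nat_diff not_le less_2_cases_iff)
  moreover have "racah_sum 0 N a = (if 2 \<le> b then racah_term 0 N a 0 else 0)
      + (if 1 \<le> a \<and> 1 \<le> b then racah_term 0 N a 1 else 0) + (if 2 \<le> a then racah_term 0 N a 2 else 0)"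
    using N by (simp add: racah_sum_expand)
  ultimately show ?thesis by (simp add: distrib_right)
qed

lemma clebsch_gordan_2_minus_2:
  assumes N: "N = a + b + 2"
  shows "clebsch_gordan 2 (-2) (real N / 2) (real (a + 2) - real N / 2) (real N / 2) (real a - real N / 2)
     = cg2_norm N * (sqrt 24 / 4) * sqrt (real ((a + 2) * (a + 1) * (b + 2) * (b + 1)))"
proof -
  have "(fact a * fact (N - a) * fact (nat (2 - -2)) * fact (nat (2 + -2)) * fact (N - (a + 2)) * fact (a + 2) :: real)
      = (24 * real ((a + 2) * (a + 1) * (b + 2) * (b + 1))) * (fact a * fact b)\<^sup>2"
    using N by (simp add: numeral_2_eq_2 fact_numeral power2_eq_square algebra_simps)
  then have "clebsch_gordan 2 (-2) (real N / 2) (real (a + 2) - real N / 2) (real N / 2) (real a - real N / 2)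
      = cg2_norm N * sqrt (24 * real ((a + 2) * (a + 1) * (b + 2) * (b + 1))) * (racah_sum (-2) N (a + 2) * (fact a * fact b))"
    using clebsch_gordan_2_racah[of N "a + 2" a "-2"] N by (simp add: sqrt_mult_square)
  then show ?thesis
    unfolding racah_sum_minus_2[OF N] of_nat_mult real_sqrt_mult by simp
qed

lemma clebsch_gordan_2_2:
  assumes N: "N = a + b + 2"
  shows "clebsch_gordan 2 2 (real N / 2) (real a - real N / 2) (real N / 2) (real (a + 2) - real N / 2)
     = cg2_norm N * (sqrt 24 / 4) * sqrt (real ((a + 2) * (a + 1) * (b + 2) * (b + 1)))"
proof -
  have "(fact (a + 2) * fact (N - (a + 2)) * fact (nat (2 - 2)) * fact (nat (2 + 2)) * fact (N - a) * fact a :: real)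
      = (24 * real ((a + 2) * (a + 1) * (b + 2) * (b + 1))) * (fact a * fact b)\<^sup>2"
    using N by (simp add: numeral_2_eq_2 fact_numeral power2_eq_square algebra_simps)
  then have "clebsch_gordan 2 2 (real N / 2) (real a - real N / 2) (real N / 2) (real (a + 2) - real N / 2)
      = cg2_norm N * sqrt (24 * real ((a + 2) * (a + 1) * (b + 2) * (b + 1))) * (racah_sum 2 N a * (fact a * fact b))"
    using clebsch_gordan_2_racah[of N a "a + 2" 2] N by (simp add: sqrt_mult_square)
  then show ?thesis
    unfolding racah_sum_2[OF N] of_nat_mult real_sqrt_mult by simp
qed

lemma clebsch_gordan_2_minus_1:
  assumes N: "N = a + b + 1" "N \<ge> 2"
  shows "clebsch_gordan 2 (-1) (real N / 2) (real (a + 1) - real N / 2) (real N / 2) (real a - real N / 2)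
     = cg2_norm N * sqrt 6 * sqrt (real ((a + 1) * (b + 1))) * ((real a - real b) / 2)"
proof -
  have "(fact a * fact (N - a) * fact (nat (2 - -1)) * fact (nat (2 + -1)) * fact (N - (a + 1)) * fact (a + 1) :: real)
      = (6 * real ((a + 1) * (b + 1))) * (fact a * fact b)\<^sup>2"
    using N by (simp add: fact_numeral power2_eq_square algebra_simps)
  then have "clebsch_gordan 2 (-1) (real N / 2) (real (a + 1) - real N / 2) (real N / 2) (real a - real N / 2)
      = cg2_norm N * sqrt (6 * real ((a + 1) * (b + 1))) * (racah_sum (-1) N (a + 1) * (fact a * fact b))"
    using clebsch_gordan_2_racah[of N "a + 1" a "-1"] N by (simp add: sqrt_mult_square)
  then show ?thesis
    unfolding racah_sum_minus_1[OF N(1)] of_nat_mult real_sqrt_mult by simp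
qed

lemma clebsch_gordan_2_1:
  assumes N: "N = a + b + 1" "N \<ge> 2"
  shows "clebsch_gordan 2 1 (real N / 2) (real a - real N / 2) (real N / 2) (real (a + 1) - real N / 2)
     = cg2_norm N * sqrt 6 * sqrt (real ((a + 1) * (b + 1))) * ((real b - real a) / 2)"
proof -
  have "(fact (a + 1) * fact (N - (a + 1)) * fact (nat (2 - 1)) * fact (nat (2 + 1)) * fact (N - a) * fact a :: real)
      = (6 * real ((a + 1) * (b + 1))) * (fact a * fact b)\<^sup>2"
    using N by (simp add: fact_numeral power2_eq_square algebra_simps)
  then have "clebsch_gordan 2 1 (real N / 2) (real a - real N / 2) (real N / 2) (real (a + 1) - real N / 2)
      = cg2_norm N * sqrt (6 * real ((a + 1) * (b + 1))) * (racah_sum 1 N a * (fact a * fact b))"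
    using clebsch_gordan_2_racah[of N a "a + 1" 1] N by (simp add: sqrt_mult_square)
  then show ?thesis
    unfolding racah_sum_1[OF N(1)] of_nat_mult real_sqrt_mult by simp
qed

lemma clebsch_gordan_2_0:
  assumes N: "N = a + b" "N \<ge> 2"
  shows "clebsch_gordan 2 0 (real N / 2) (real a - real N / 2) (real N / 2) (real a - real N / 2)
     = cg2_norm N * ((real a * (real a - 1) + real b * (real b - 1)) / 2 - 2 * real a * real b)"
proof -
  have prod_sq: "(fact a * fact (N - a) * fact (nat (2 - 0)) * fact (nat (2 + 0)) * fact (N - a) * fact a :: real)
      = (2 * (fact a * fact b))\<^sup>2"
    using N by (simp add: fact_numeral power2_eq_square algebra_simps)
  have "sqrt (fact a * fact (N - a) * fact (nat (2 - 0)) * fact (nat (2 + 0)) * fact (N - a) * fact a)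
      = 2 * (fact a * fact b)"
    by (simp only: prod_sq real_sqrt_abs) simp
  then have "clebsch_gordan 2 0 (real N / 2) (real a - real N / 2) (real N / 2) (real a - real N / 2)
      = cg2_norm N * 2 * (racah_sum 0 N a * (fact a * fact b))"
    using clebsch_gordan_2_racah[of N a a 0] N by (simp only: of_int_0 mult.assoc) simp
  then show ?thesis
    unfolding racah_sum_0[OF N(1)] by (simp add: field_simps)
qed

lemma spin_tensor_2_index:
  assumes "k < d" "i < d"
  shows "spin_tensor d 2 q $$ (k,i) = (if int k = int i + q then complex_of_real (sqrt (5 / real d)
    * clebsch_gordan 2 (of_int q) (real (d - 1) / 2) (real i - real (d - 1) / 2) (real (d - 1) / 2) (real k - real (d - 1) / 2))
    else 0)"
proof -
  have dim: "2 * spinJ d + 1 = real d" by (simp add: spinJ_def field_simps)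
  have spin: "spinJ d = real (d - 1) / 2" and m: "mval d j = real j - real (d - 1) / 2" for j
    using assms by (simp_all add: spinJ_def mval_def of_nat_diff)
  have "real k = real i + of_int q \<longleftrightarrow> int k = int i + q"
    by (metis of_int_add of_int_eq_iff of_int_of_nat_eq)
  then show ?thesis
    using assms unfolding spin_tensor_def dim unfolding spin m by simp
qed

section \<open>Rank-2 spherical tensors from the ladder operators\<close>

lemma spin_tensor_carrier[simp]: "spin_tensor d k q \<in> carrier_mat d d"
  by (simp add: spin_tensor_def)

lemma spin_tensor_dims[simp]: "dim_row (spin_tensor d k q) = d" "dim_col (spin_tensor d k q) = d"
  by (simp_all add: spin_tensor_def)

lemma spin_tensor_band:
  assumes "i < d" "j < d" "int i - int j \<noteq> q"
  shows "spin_tensor d k q $$ (i,j) = 0"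
proof -
  have "mval d i \<noteq> mval d j + of_int q"
    using assms(3) by (simp add: mval_def)
  then show ?thesis using assms by (simp add: spin_tensor_def)
qed

lemma lie_bracket_Jminus_mat_diag_index:
  "k < d \<Longrightarrow> i < d \<Longrightarrow>
    lie_bracket (Jminus d) (mat_diag d g) $$ (k,i) = (if i = k + 1 then ladder_coeff d k * (g (k + 1) - g k) else 0)"
  by (simp add: mult_mat_diag_index mat_diag_mult_index index_Jminus algebra_simps)

lemma lie_bracket_Jplus_mat_diag_index:
  "k < d \<Longrightarrow> i < d \<Longrightarrow>
    lie_bracket (Jplus d) (mat_diag d g) $$ (k,i) = (if k = i + 1 then ladder_coeff d i * (g i - g (i + 1)) else 0)"
  by (simp add: mult_mat_diag_index mat_diag_mult_index index_Jplus algebra_simps)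

lemma ad_Jminus_2_mat_diag_index:
  assumes "k < d" "i < d"
  shows "(lie_bracket (Jminus d) ^^ 2) (mat_diag d g) $$ (k,i) = (if i = k + 2 then
    ladder_coeff d k * ladder_coeff d (k + 1) * (g k - 2 * g (k + 1) + g (k + 2)) else 0)"
proof -
  define Z where "Z = lie_bracket (Jminus d) (mat_diag d g)"
  have Z: "Z \<in> carrier_mat d d" unfolding Z_def by (simp add: lie_bracket_carrier)
  have Z_index: "Z $$ (a,b) = lie_bracket (Jminus d) (mat_diag d g) $$ (a,b)" for a b
    by (simp add: Z_def)
  have square: "(lie_bracket (Jminus d) ^^ 2) (mat_diag d g) = lie_bracket (Jminus d) Z"
    by (simp add: Z_def numeral_2_eq_2)
  show ?thesis
    using assms unfolding square index_lie_bracket[OF Jminus_carrier Z assms]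
    by (auto simp: Jminus_mult_index[OF Z] mult_Jminus_index[OF Z] Z_index lie_bracket_Jminus_mat_diag_index
        algebra_simps simp del: index_minus_mat)
qed

lemma ad_Jplus_2_mat_diag_index:
  assumes "k < d" "i < d"
  shows "(lie_bracket (Jplus d) ^^ 2) (mat_diag d g) $$ (k,i) = (if k = i + 2 then
    ladder_coeff d i * ladder_coeff d (i + 1) * (g i - 2 * g (i + 1) + g (i + 2)) else 0)"
proof -
  define Z where "Z = lie_bracket (Jplus d) (mat_diag d g)"
  have Z: "Z \<in> carrier_mat d d" unfolding Z_def by (simp add: lie_bracket_carrier)
  have Z_index: "Z $$ (a,b) = lie_bracket (Jplus d) (mat_diag d g) $$ (a,b)" for a b
    by (simp add: Z_def)
  have square: "(lie_bracket (Jplus d) ^^ 2) (mat_diag d g) = lie_bracket (Jplus d) Z"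
    by (simp add: Z_def numeral_2_eq_2)
  show ?thesis
    using assms unfolding square index_lie_bracket[OF Jplus_carrier Z assms]
    by (auto simp: Jplus_mult_index[OF Z] mult_Jplus_index[OF Z] Z_index lie_bracket_Jplus_mat_diag_index
        algebra_simps simp del: index_minus_mat)
qed

lemma quadrupole_diff: "quadrupole N (k + 1) - quadrupole N k = complex_of_real (12 * real k + 6 - 6 * real N)"
  by (simp add: quadrupole_def algebra_simps power2_eq_square)

lemma quadrupole_second_diff: "quadrupole N k - 2 * quadrupole N (k + 1) + quadrupole N (k + 2) = 12"
  by (simp add: quadrupole_def algebra_simps power2_eq_square)

definition spin2_norm :: "nat \<Rightarrow> real" where
  "spin2_norm d = sqrt (5 / real d) * cg2_norm (d - 1)"

lemma spin2_norm_pos: "d \<ge> 1 \<Longrightarrow> spin2_norm d > 0"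
  by (simp add: spin2_norm_def cg2_norm_pos)

lemma ladder_coeff_eq: "ladder_coeff d k = complex_of_real (sqrt (real (d - 1 - k)) * sqrt (real (k + 1)))"
  unfolding ladder_coeff_def of_nat_mult real_sqrt_mult ..

lemma mat_diag_quadrupole_eq_spin_tensor:
  assumes d: "d \<ge> 3"
  shows "mat_diag d (quadrupole (d - 1)) = complex_of_real (2 / spin2_norm d) \<cdot>\<^sub>m spin_tensor d 2 0"
proof (rule eq_smult_if_entries)
  fix k i assume ki: "k < d" "i < d"
  show "mat_diag d (quadrupole (d - 1)) $$ (k,i) = complex_of_real (2 / spin2_norm d) * spin_tensor d 2 0 $$ (k,i)"
  proof (cases "i = k")
    case True
    define b where "b = d - 1 - k"
    have N: "d - 1 = k + b" "d - 1 \<ge> 2" using d ki by (auto simp: b_def)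
    then have rb: "real (d - 1) = real k + real b" by simp
    let ?V = "(real k * (real k - 1) + real b * (real b - 1)) / 2 - 2 * real k * real b"
    have "mat_diag d (quadrupole (d - 1)) $$ (k,i) = complex_of_real
        (6 * real k ^ 2 - 6 * real (d - 1) * real k + real (d - 1) * (real (d - 1) - 1))"
      using ki True by (simp add: quadrupole_def)
    also have "\<dots> = complex_of_real (2 / spin2_norm d * (spin2_norm d * ?V))"
      using spin2_norm_pos[of d] d unfolding rb by (simp add: field_simps power2_eq_square)
    also have "\<dots> = complex_of_real (2 / spin2_norm d) * spin_tensor d 2 0 $$ (k,i)"
      using ki True clebsch_gordan_2_0[OF N, symmetric]
      by (simp add: spin_tensor_2_index spin2_norm_def)
    finally show ?thesis .
  qed (use ki in \<open>simp add: spin_tensor_band\<close>)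
qed simp_all

lemma ad_Jminus_quadrupole_eq_spin_tensor:
  assumes d: "d \<ge> 3"
  shows "lie_bracket (Jminus d) (mat_diag d (quadrupole (d - 1)))
    = complex_of_real (12 / (spin2_norm d * sqrt 6)) \<cdot>\<^sub>m spin_tensor d 2 (-1)"
proof (rule eq_smult_if_entries)
  fix k i assume ki: "k < d" "i < d"
  let ?c = "12 / (spin2_norm d * sqrt 6)"
  show "lie_bracket (Jminus d) (mat_diag d (quadrupole (d - 1))) $$ (k,i) = complex_of_real ?c * spin_tensor d 2 (-1) $$ (k,i)"
  proof (cases "i = k + 1")
    case True
    define b where "b = d - 2 - k"
    have N: "d - 1 = k + b + 1" "d - 1 \<ge> 2" using d ki True by (auto simp: b_def)
    then have rb: "real (d - 1) = real k + real b + 1" "d - 1 - k = b + 1" by simp_all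
    have "lie_bracket (Jminus d) (mat_diag d (quadrupole (d - 1))) $$ (k,i)
        = complex_of_real (sqrt (real (b + 1)) * sqrt (real (k + 1)) * (12 * real k + 6 - 6 * real (d - 1)))"
      unfolding lie_bracket_Jminus_mat_diag_index[OF ki] quadrupole_diff ladder_coeff_eq rb(2) using True by simp
    also have "\<dots> = complex_of_real (?c * (spin2_norm d * sqrt 6 * sqrt (real ((k + 1) * (b + 1))) * ((real k - real b) / 2)))"
      using spin2_norm_pos[of d] d unfolding rb(1) of_nat_mult real_sqrt_mult by (simp add: field_simps)
    also have "\<dots> = complex_of_real ?c * spin_tensor d 2 (-1) $$ (k,i)"
      using ki True clebsch_gordan_2_minus_1[OF N, symmetric]
      by (simp add: spin_tensor_2_index spin2_norm_def mult.assoc)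
    finally show ?thesis .
  qed (simp add: lie_bracket_Jminus_mat_diag_index[OF ki] spin_tensor_band[OF ki])
qed (simp_all add: lie_bracket_carrier)

lemma ad_Jplus_quadrupole_eq_spin_tensor:
  assumes d: "d \<ge> 3"
  shows "lie_bracket (Jplus d) (mat_diag d (quadrupole (d - 1)))
    = complex_of_real (12 / (spin2_norm d * sqrt 6)) \<cdot>\<^sub>m spin_tensor d 2 1"
proof (rule eq_smult_if_entries)
  fix k i assume ki: "k < d" "i < d"
  let ?c = "12 / (spin2_norm d * sqrt 6)"
  show "lie_bracket (Jplus d) (mat_diag d (quadrupole (d - 1))) $$ (k,i) = complex_of_real ?c * spin_tensor d 2 1 $$ (k,i)"
  proof (cases "k = i + 1")
    case True
    define b where "b = d - 2 - i"
    have N: "d - 1 = i + b + 1" "d - 1 \<ge> 2" using d ki True by (auto simp: b_def)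
    then have rb: "real (d - 1) = real i + real b + 1" "d - 1 - i = b + 1" by simp_all
    have "quadrupole (d - 1) i - quadrupole (d - 1) (i + 1) = - complex_of_real (12 * real i + 6 - 6 * real (d - 1))"
      by (metis minus_diff_eq quadrupole_diff)
    then have "lie_bracket (Jplus d) (mat_diag d (quadrupole (d - 1))) $$ (k,i)
        = complex_of_real (sqrt (real (b + 1)) * sqrt (real (i + 1)) * (6 * real (d - 1) - 12 * real i - 6))"
      unfolding lie_bracket_Jplus_mat_diag_index[OF ki] ladder_coeff_eq rb(2) using True by simp
    also have "\<dots> = complex_of_real (?c * (spin2_norm d * sqrt 6 * sqrt (real ((i + 1) * (b + 1))) * ((real b - real i) / 2)))"
      using spin2_norm_pos[of d] d unfolding rb(1) of_nat_mult real_sqrt_mult by (simp add: field_simps)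
    also have "\<dots> = complex_of_real ?c * spin_tensor d 2 1 $$ (k,i)"
      using ki True clebsch_gordan_2_1[OF N, symmetric]
      by (simp add: spin_tensor_2_index spin2_norm_def mult.assoc)
    finally show ?thesis .
  qed (simp add: lie_bracket_Jplus_mat_diag_index[OF ki] spin_tensor_band[OF ki])
qed (simp_all add: lie_bracket_carrier)

lemma ad_Jminus_2_quadrupole_eq_spin_tensor:
  assumes d: "d \<ge> 3"
  shows "(lie_bracket (Jminus d) ^^ 2) (mat_diag d (quadrupole (d - 1)))
    = complex_of_real (48 / (spin2_norm d * sqrt 24)) \<cdot>\<^sub>m spin_tensor d 2 (-2)"
proof (rule eq_smult_if_entries)
  fix k i assume ki: "k < d" "i < d"
  let ?c = "48 / (spin2_norm d * sqrt 24)"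
  show "(lie_bracket (Jminus d) ^^ 2) (mat_diag d (quadrupole (d - 1))) $$ (k,i) = complex_of_real ?c * spin_tensor d 2 (-2) $$ (k,i)"
  proof (cases "i = k + 2")
    case True
    define b where "b = d - 3 - k"
    have N: "d - 1 = k + b + 2" using d ki True by (auto simp: b_def)
    then have rb: "d - 1 - k = b + 2" "d - 1 - (k + 1) = b + 1" by simp_all
    have "(lie_bracket (Jminus d) ^^ 2) (mat_diag d (quadrupole (d - 1))) $$ (k,i)
        = complex_of_real (12 * (sqrt (real (b + 2)) * sqrt (real (k + 1)) * (sqrt (real (b + 1)) * sqrt (real (k + 1 + 1)))))"
      unfolding ad_Jminus_2_mat_diag_index[OF ki] quadrupole_second_diff ladder_coeff_eq rb using True by simp
    also have "\<dots> = complex_of_real (?c * (spin2_norm d * (sqrt 24 / 4) * sqrt (real ((k + 2) * (k + 1) * (b + 2) * (b + 1)))))"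
      using spin2_norm_pos[of d] d unfolding of_nat_mult real_sqrt_mult by (simp add: field_simps)
    also have "\<dots> = complex_of_real ?c * spin_tensor d 2 (-2) $$ (k,i)"
      using ki True clebsch_gordan_2_minus_2[OF N, symmetric]
      by (simp add: spin_tensor_2_index spin2_norm_def mult.assoc)
    finally show ?thesis .
  qed (simp add: ad_Jminus_2_mat_diag_index[OF ki] spin_tensor_band[OF ki])
qed (simp_all add: ad_pow_carrier)

lemma ad_Jplus_2_quadrupole_eq_spin_tensor:
  assumes d: "d \<ge> 3"
  shows "(lie_bracket (Jplus d) ^^ 2) (mat_diag d (quadrupole (d - 1)))
    = complex_of_real (48 / (spin2_norm d * sqrt 24)) \<cdot>\<^sub>m spin_tensor d 2 2"
proof (rule eq_smult_if_entries)
  fix k i assume ki: "k < d" "i < d"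
  let ?c = "48 / (spin2_norm d * sqrt 24)"
  show "(lie_bracket (Jplus d) ^^ 2) (mat_diag d (quadrupole (d - 1))) $$ (k,i) = complex_of_real ?c * spin_tensor d 2 2 $$ (k,i)"
  proof (cases "k = i + 2")
    case True
    define b where "b = d - 3 - i"
    have N: "d - 1 = i + b + 2" using d ki True by (auto simp: b_def)
    then have rb: "d - 1 - i = b + 2" "d - 1 - (i + 1) = b + 1" by simp_all
    have "(lie_bracket (Jplus d) ^^ 2) (mat_diag d (quadrupole (d - 1))) $$ (k,i)
        = complex_of_real (12 * (sqrt (real (b + 2)) * sqrt (real (i + 1)) * (sqrt (real (b + 1)) * sqrt (real (i + 1 + 1)))))"
      unfolding ad_Jplus_2_mat_diag_index[OF ki] quadrupole_second_diff ladder_coeff_eq rb using True by simp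
    also have "\<dots> = complex_of_real (?c * (spin2_norm d * (sqrt 24 / 4) * sqrt (real ((i + 2) * (i + 1) * (b + 2) * (b + 1)))))"
      using spin2_norm_pos[of d] d unfolding of_nat_mult real_sqrt_mult by (simp add: field_simps)
    also have "\<dots> = complex_of_real ?c * spin_tensor d 2 2 $$ (k,i)"
      using ki True clebsch_gordan_2_2[OF N, symmetric]
      by (simp add: spin_tensor_2_index spin2_norm_def mult.assoc)
    finally show ?thesis .
  qed (simp add: ad_Jplus_2_mat_diag_index[OF ki] spin_tensor_band[OF ki])
qed (simp_all add: ad_pow_carrier)

lemma spin_tensor_2_eq_ad_pow_quadrupole:
  assumes d: "d \<ge> 3" and q: "-2 \<le> q" "q \<le> 2"
  shows "\<exists>A\<in>{Jplus d, Jminus d}. \<exists>n c. c \<noteq> 0 \<and>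
    (lie_bracket A ^^ n) (mat_diag d (quadrupole (d - 1))) = c \<cdot>\<^sub>m spin_tensor d 2 q"
proof -
  let ?D = "mat_diag d (quadrupole (d - 1))"
  have witness: "\<exists>A\<in>{Jplus d, Jminus d}. \<exists>n c. c \<noteq> 0 \<and> (lie_bracket A ^^ n) ?D = c \<cdot>\<^sub>m spin_tensor d 2 q"
    if "A \<in> {Jplus d, Jminus d}" "(lie_bracket A ^^ n) ?D = complex_of_real c \<cdot>\<^sub>m spin_tensor d 2 q" "c \<noteq> 0"
    for A n c
    using that by (intro bexI[of _ A] exI[of _ n] exI[of _ "complex_of_real c"]) auto
  have pos: "spin2_norm d > 0" using d by (simp add: spin2_norm_pos)
  from q have "q \<in> {-2, -1, 0, 1, 2}" by auto
  then show ?thesis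
  proof (elim insertE emptyE)
    assume "q = -2" then show ?thesis
      by (intro witness[where A = "Jminus d" and n = 2 and c = "48 / (spin2_norm d * sqrt 24)"]) (use ad_Jminus_2_quadrupole_eq_spin_tensor[OF d] pos in auto)
  next
    assume "q = -1" then show ?thesis
      by (intro witness[where A = "Jminus d" and n = 1 and c = "12 / (spin2_norm d * sqrt 6)"]) (use ad_Jminus_quadrupole_eq_spin_tensor[OF d] pos in auto)
  next
    assume "q = 0" then show ?thesis
      by (intro witness[where A = "Jplus d" and n = 0 and c = "2 / spin2_norm d"]) (use mat_diag_quadrupole_eq_spin_tensor[OF d] pos in auto)
  next
    assume "q = 1" then show ?thesis
      by (intro witness[where A = "Jplus d" and n = 1 and c = "12 / (spin2_norm d * sqrt 6)"]) (use ad_Jplus_quadrupole_eq_spin_tensor[OF d] pos in auto)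
  next
    assume "q = 2" then show ?thesis
      by (intro witness[where A = "Jplus d" and n = 2 and c = "48 / (spin2_norm d * sqrt 24)"]) (use ad_Jplus_2_quadrupole_eq_spin_tensor[OF d] pos in auto)
  qed
qed

lemma pairing_diag_eq_trace:
  assumes "Y \<in> carrier_mat d d" "d \<ge> 1"
  shows "pairing (d - 1) (\<lambda>i. Y $$ (i,i)) g = trace (Y * mat_diag d g)"
proof -
  have "{..d - 1} = {..<d}" using assms(2) by auto
  then show ?thesis using assms(1) by (simp add: pairing_def trace_def mult_mat_diag_index)
qed

context spin_lie_algebra
begin

lemma diag_with_quadrupole_pairing_exists:
  assumes h: "h \<in> M" and d: "d \<ge> 3" and q: "-2 \<le> q" "q \<le> 2"
    and nz: "trace (h * spin_tensor d 2 q) \<noteq> 0"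
  shows "\<exists>f. mat_diag d f \<in> M \<and> pairing (d - 1) f (quadrupole (d - 1)) \<noteq> 0"
proof -
  let ?D = "mat_diag d (quadrupole (d - 1))"
  obtain A n c where A: "A \<in> {Jplus d, Jminus d}" and c: "c \<noteq> 0"
    and W: "(lie_bracket A ^^ n) ?D = c \<cdot>\<^sub>m spin_tensor d 2 q"
    using spin_tensor_2_eq_ad_pow_quadrupole[OF d q] by blast
  have A_mem: "A \<in> M" and A_car: "A \<in> carrier_mat d d" using A Jplus_mem Jminus_mem by auto
  have h_car: "h \<in> carrier_mat d d" using h by (rule mem_carrier)
  define Y where "Y = (lie_bracket A ^^ n) (band d (- q) h)"
  have Y: "Y \<in> M" unfolding Y_def by (intro ad_pow_closed A_mem band_closed h)
  have "pairing (d - 1) (\<lambda>i. Y $$ (i,i)) (quadrupole (d - 1)) = trace (Y * ?D)"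
    using Y d by (intro pairing_diag_eq_trace mem_carrier) auto
  also have "\<dots> = (-1) ^ n * trace (band d (- q) h * (c \<cdot>\<^sub>m spin_tensor d 2 q))"
    unfolding Y_def W[symmetric] by (rule trace_ad_pow_mult[OF A_car]) auto
  also have "\<dots> = (-1) ^ n * trace (h * (c \<cdot>\<^sub>m spin_tensor d 2 q))"
    using h_car by (subst trace_band_mult) (auto simp: spin_tensor_band)
  also have "\<dots> = (-1) ^ n * c * trace (h * spin_tensor d 2 q)"
    using h_car by (simp add: trace_mult_smult_right[of _ d])
  finally have "pairing (d - 1) (\<lambda>i. Y $$ (i,i)) (quadrupole (d - 1)) \<noteq> 0"
    using c nz by simp
  then show ?thesis using diag_closed[OF Y] by blast
qed

end

theorem theorem1:
  fixes d :: nat and h :: "complex mat"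
  assumes "d > 2"
    and "h \<in> carrier_mat d d"
    and "hermitian h"
    and "trace h = 0"
    and "\<exists>q::int. -2 \<le> q \<and> q \<le> 2 \<and> trace (h * spin_tensor d 2 q) \<noteq> 0"
  shows "lie_generated d {-\<i> \<cdot>\<^sub>m Jx d, -\<i> \<cdot>\<^sub>m Jy d, -\<i> \<cdot>\<^sub>m h} = su d"
proof -
  define S where "S = {-\<i> \<cdot>\<^sub>m Jx d, -\<i> \<cdot>\<^sub>m Jy d, -\<i> \<cdot>\<^sub>m h}"
  have S_su: "S \<subseteq> su d"
    unfolding S_def using assms(2-4)
    by (auto intro!: hermitian_traceless_su simp: Jx_hermitian Jy_hermitian Jx_traceless Jy_traceless)
  then have S_car: "S \<subseteq> carrier_mat d d" by (auto simp: su_def)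
  interpret spin_lie_algebra d "complexification d S"
    by (rule spin_lie_algebra_complexification[OF S_car]) (simp_all add: S_def)
  have h: "h \<in> complexification d S"
    by (rule complexification_mem_if_generator[OF S_car]) (simp add: S_def)
  obtain q :: int where q: "-2 \<le> q" "q \<le> 2" "trace (h * spin_tensor d 2 q) \<noteq> 0"
    using assms(5) by blast
  obtain f where "mat_diag d f \<in> complexification d S" "pairing (d - 1) f (quadrupole (d - 1)) \<noteq> 0"
    using diag_with_quadrupole_pairing_exists[OF h _ q] assms(1) by auto
  then have "A \<in> complexification d S" if "A \<in> carrier_mat d d" "trace A = 0" for A
    using traceless_closed_if_quadrupole_pairing that assms(1) by simp
  then show ?thesis
    unfolding S_def[symmetric] by (rule lie_generated_eq_su[OF S_su])
qed

end
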